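(* Let $\mathbb K$ be a field with $\operatorname{char}(\mathbb K)=0$, $n\ge2$, and $\mathcal G_n$, $z_e$ as in the context. If $f\in A_{\mathbb K}(\mathcal G_n)$ satisfies $f(z_e)\neq0$, then $\operatorname{supp}(f)=\{x\in\mathcal G_n:f(x)\neq0\}$ has nonempty interior; thus $f\notin S_{\mathbb K}(\mathcal G_n)$.
   Context: Let $X=\{\mathbf 0,\mathbf 1\}$, $X^*$ the finite words (with empty word $\varnothing$), $X^\omega$ the infinite words, $C(\eta)=\{\eta w:w\in X^\omega\}$, $\mathbf 1^\infty$ the infinite word of ones. Fix $n\ge2$, a primitive polynomial $f_n$ of degree $n$ over $\mathbb F_2$ with root $\alpha$, and $\operatorname{Tr}(\beta)=\beta+\beta^2+\dots+\beta^{2^{n-1}}\in\mathbb F_2$. $\mathfrak G_n$ is the group of automorphisms of the binary rooted tree $X^*$ generated by $a$ ($a\cdot(\mathbf 0w)=\mathbf 1w$, $a\cdot(\mathbf 1w)=\mathbf 0w$) and $\iota_n(\beta)$, $\beta\in\mathbb F_{2^n}$, where $\iota_n(\beta)\cdot(\mathbf 0w)=\mathbf 0(a^{\operatorname{Tr}(\beta)}\cdot w)$, $\iota_n(\beta)\cdot(\mathbf 1w)=\mathbf 1(\iota_n(\alpha\beta)\cdot w)$; restrictions $g|_x$ are given by $g\cdot(xw)=(g\cdot x)(g|_x\cdot w)$; $e$ is the identity. $\mathcal G_n$ is the groupoid of germs of the action of the inverse semigroup $\{(\eta,g,\mu)\}\cup\{0\}$ on $X^\omega$ with $(\eta,g,\mu):C(\mu)\to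 C(\eta)$, $\mu w\mapsto\eta(g\cdot w)$; germs $[(\eta,g,\mu),w]$, $w\in C(\mu)$, with $[(\eta,g,\mu),w]=[(\eta',g',\mu'),w']$ iff $w=w'$ and some finite prefix $\nu=\mu\epsilon=\mu'\epsilon'$ of $w$ satisfies $\eta(g\cdot\epsilon)=\eta'(g'\cdot\epsilon')$ and $g|_\epsilon=g'|_{\epsilon'}$; basic open bisections $\{[s,w]:w\in U\}$. $z_e=[(\varnothing,e,\varnothing),\mathbf 1^\infty]$. $A_{\mathbb K}(\mathcal G_n)$ is the Steinberg algebra (the $\mathbb K$-span of characteristic functions of compact open bisections), and $S_{\mathbb K}(\mathcal G_n)$ is its ideal of singular functions: $f=\sum_i c_i1_{S_i}$ with each $S_i$ relatively closed in an open bisection and of empty interior (equivalently, $\operatorname{supp}(f)$ has empty interior). *)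

theory Defs
  imports "HOL-Analysis.Analysis" "HOL-Library.Z2" "HOL-Computational_Algebra.Polynomial_Factorial"
begin

text \<open>Letter 0 is False, letter 1 is True.
  Elements of F_(2^n) are represented by their reduced residues modulo f,
  i.e. polynomials of degree < n; the root alpha of f is the class of x.\<close>

definition primitive_poly :: "bit poly \<Rightarrow> nat \<Rightarrow> bool" where
  "primitive_poly f n \<longleftrightarrow> degree f = n \<and> irreducible f \<and>
     [:0, 1:] ^ (2 ^ n - 1) mod f = 1 \<and>
     (\<forall>k. 0 < k \<and> k < 2 ^ n - 1 \<longrightarrow> [:0, 1:] ^ k mod f \<noteq> 1)"

definition field_elems :: "bit poly \<Rightarrow> bit poly set" where
  "field_elems f = {\<beta>. \<beta> = \<beta> mod f}"

definition alpha_mult :: "bit poly \<Rightarrow> bit poly \<Rightarrow> bit poly" where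
  "alpha_mult f \<beta> = ([:0, 1:] * \<beta>) mod f"

definition trace :: "bit poly \<Rightarrow> nat \<Rightarrow> bit poly \<Rightarrow> bit poly" where
  "trace f n \<beta> = (\<Sum>i<n. \<beta> ^ (2 ^ i)) mod f"

fun a_act :: "bool list \<Rightarrow> bool list" where
  "a_act [] = []"
| "a_act (x # w) = (\<not> x) # w"

fun iota :: "bit poly \<Rightarrow> nat \<Rightarrow> bit poly \<Rightarrow> bool list \<Rightarrow> bool list" where
  "iota f n \<beta> [] = []"
| "iota f n \<beta> (False # w) = False # (if trace f n \<beta> = 1 then a_act w else w)"
| "iota f n \<beta> (True # w) = True # iota f n (alpha_mult f \<beta>) w"

inductive_set Ggroup :: "bit poly \<Rightarrow> nat \<Rightarrow> (bool list \<Rightarrow> bool list) set"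
  for f :: "bit poly" and n :: nat where
  gen_id: "id \<in> Ggroup f n"
| gen_a: "a_act \<in> Ggroup f n"
| gen_iota: "\<beta> \<in> field_elems f \<Longrightarrow> iota f n \<beta> \<in> Ggroup f n"
| gen_comp: "g \<in> Ggroup f n \<Longrightarrow> h \<in> Ggroup f n \<Longrightarrow> g \<circ> h \<in> Ggroup f n"
| gen_inv: "g \<in> Ggroup f n \<Longrightarrow> inv g \<in> Ggroup f n"

definition restr :: "(bool list \<Rightarrow> bool list) \<Rightarrow> bool list \<Rightarrow> bool list \<Rightarrow> bool list" where
  "restr g x = (\<lambda>w. drop (length x) (g (x @ w)))"

type_synonym iword = "nat \<Rightarrow> bool"

definition pref :: "iword \<Rightarrow> nat \<Rightarrow> bool list" where
  "pref w k = map w [0..<k]"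

definition conc :: "bool list \<Rightarrow> iword \<Rightarrow> iword" where
  "conc \<eta> v = (\<lambda>k. if k < length \<eta> then \<eta> ! k else v (k - length \<eta>))"

definition sfx :: "nat \<Rightarrow> iword \<Rightarrow> iword" where
  "sfx m w = (\<lambda>k. w (k + m))"

definition cyl :: "bool list \<Rightarrow> iword set" where
  "cyl \<eta> = {conc \<eta> w | w. True}"

definition ones :: iword where "ones = (\<lambda>_. True)"

definition act_inf :: "(bool list \<Rightarrow> bool list) \<Rightarrow> iword \<Rightarrow> iword" where
  "act_inf g w = (\<lambda>k. g (pref w (Suc k)) ! k)"

definition cantor_open :: "iword set \<Rightarrow> bool" where
  "cantor_open U \<longleftrightarrow> (\<forall>w\<in>U. \<exists>k. cyl (pref w k) \<subseteq> U)"

type_synonym rep = "bool list \<times> (bool list \<Rightarrow> bool list) \<times> bool list \<times> iword"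

text \<open>(eta, g, mu) acts C(mu) -> C(eta), mu w |-> eta (g w).\<close>
definition valid_rep :: "bit poly \<Rightarrow> nat \<Rightarrow> rep \<Rightarrow> bool" where
  "valid_rep f n r = (case r of (\<eta>, g, \<mu>, w) \<Rightarrow> g \<in> Ggroup f n \<and> w \<in> cyl \<mu>)"

definition germ_eq :: "rep \<Rightarrow> rep \<Rightarrow> bool" where
  "germ_eq r r' = (case r of (\<eta>, g, \<mu>, w) \<Rightarrow> case r' of (\<eta>', g', \<mu>', w') \<Rightarrow>
     w = w' \<and> (\<exists>k \<epsilon> \<epsilon>'. pref w k = \<mu> @ \<epsilon> \<and> pref w k = \<mu>' @ \<epsilon>' \<and>
        \<eta> @ g \<epsilon> = \<eta>' @ g' \<epsilon>' \<and> restr g \<epsilon> = restr g' \<epsilon>'))"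

definition germ :: "bit poly \<Rightarrow> nat \<Rightarrow> rep \<Rightarrow> rep set" where
  "germ f n r = {r'. valid_rep f n r' \<and> germ_eq r r'}"

definition Grpd :: "bit poly \<Rightarrow> nat \<Rightarrow> rep set set" where
  "Grpd f n = {germ f n r | r. valid_rep f n r}"

definition z_e :: "bit poly \<Rightarrow> nat \<Rightarrow> rep set" where
  "z_e f n = germ f n ([], id, [], ones)"

text \<open>Source and range of a germ (independent of the representative).\<close>
definition src :: "rep set \<Rightarrow> iword" where
  "src x = (case (SOME r. r \<in> x) of (\<eta>, g, \<mu>, w) \<Rightarrow> w)"

definition rng :: "rep set \<Rightarrow> iword" where
  "rng x = (case (SOME r. r \<in> x) of (\<eta>, g, \<mu>, w) \<Rightarrow>
              conc \<eta> (act_inf g (sfx (length \<mu>) w)))"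

definition basic_sets :: "bit poly \<Rightarrow> nat \<Rightarrow> rep set set set" where
  "basic_sets f n = {{germ f n (\<eta>, g, \<mu>, w) | w. w \<in> U} | \<eta> g \<mu> U.
      g \<in> Ggroup f n \<and> U \<subseteq> cyl \<mu> \<and> cantor_open U}"

definition Gtop :: "bit poly \<Rightarrow> nat \<Rightarrow> rep set topology" where
  "Gtop f n = topology_generated_by (basic_sets f n)"

definition compact_open_bisection :: "bit poly \<Rightarrow> nat \<Rightarrow> rep set set \<Rightarrow> bool" where
  "compact_open_bisection f n B \<longleftrightarrow> openin (Gtop f n) B \<and> compactin (Gtop f n) B \<and>
     inj_on src B \<and> inj_on rng B"

definition steinberg :: "bit poly \<Rightarrow> nat \<Rightarrow> (rep set \<Rightarrow> 'k::field) set" where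
  "steinberg f n = {h. \<exists>m (c :: nat \<Rightarrow> 'k) B. (\<forall>i<m. compact_open_bisection f n (B i)) \<and>
      h = (\<lambda>x. \<Sum>i<m. c i * indicator (B i) x)}"

definition supp :: "bit poly \<Rightarrow> nat \<Rightarrow> (rep set \<Rightarrow> 'k::field) \<Rightarrow> rep set set" where
  "supp f n h = {x \<in> Grpd f n. h x \<noteq> 0}"

definition singular :: "bit poly \<Rightarrow> nat \<Rightarrow> (rep set \<Rightarrow> 'k::field) set" where
  "singular f n = {h \<in> steinberg f n. Gtop f n interior_of supp f n h = {}}"

end

theory Submission
  imports Defs
begin

(* Write y_beta for the germ of iota(beta) at 1^infinity and x_j(gamma, v) for the germ of
   iota(gamma) at 1^j 0 v. Below 1^j 0 the automorphism iota(beta) acts as a^Tr(alpha^j beta), so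
   x_j(gamma, v) depends on gamma only through Tr(alpha^j gamma), and y_beta only through the
   trace sequence (Tr(alpha^j beta))_j.

   The group G_n is contracting: the restrictions of any element along an infinite word are
   eventually of the form iota(beta). Consequently the germs x_j accumulate, as j grows, only at
   germs y_beta, and a compact open set B contains x_j(gamma, v) for all large j exactly when it
   contains some y_beta with Tr(alpha^j beta) = Tr(alpha^j gamma). For f = sum c_i 1_(B_i) with
   bisections B_i this makes f(x_j(gamma, v)), for large j, the sum of the c_i whose y_(beta_i) in
   B_i has the same trace at j as gamma, while f(z_e) = f(y_0) is the sum of the c_i whose trace
   sequence vanishes. If all these values were 0, counting zeros of trace sequences over a period
   2^n - 1 (the count is the same for every nonzero beta, and smaller than 2^n - 1) would give
   f(z_e) = 0 in characteristic 0. So f is nonzero on a whole basic open set of germs x_j(gamma, v). *)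

section \<open>Tree automorphisms\<close>

definition tree_automorphism :: "(bool list \<Rightarrow> bool list) \<Rightarrow> bool" where
  "tree_automorphism g \<longleftrightarrow> bij g \<and> (\<forall>u. length (g u) = length u) \<and>
     (\<forall>u v. take (length u) (g (u @ v)) = g u)"

lemma tree_automorphism_length: "tree_automorphism g \<Longrightarrow> length (g u) = length u"
  by (simp add: tree_automorphism_def)

lemma tree_automorphism_append: "tree_automorphism g \<Longrightarrow> g (u @ v) = g u @ restr g u v"
  unfolding tree_automorphism_def restr_def by (metis append_take_drop_id)

lemma tree_automorphism_take:
  assumes "tree_automorphism g"
  shows "take k (g u) = g (take k u)"
proof -
  have "g u = g (take k u) @ restr g (take k u) (drop k u)"
    using tree_automorphism_append[OF assms] by (metis append_take_drop_id)
  then show ?thesis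
    using tree_automorphism_length[OF assms, of "take k u"]
    by (cases "k \<le> length u") (simp_all add: tree_automorphism_length[OF assms])
qed

lemma restr_append: "restr g (u @ v) = restr (restr g u) v"
  by (simp add: restr_def fun_eq_iff add.commute)

lemma restr_id [simp]: "restr id u = id"
  by (simp add: restr_def fun_eq_iff)

lemma restr_comp:
  assumes "tree_automorphism g" and "tree_automorphism h"
  shows "restr (g \<circ> h) u = restr g (h u) \<circ> restr h u"
proof
  fix z
  have "(g \<circ> h) (u @ z) = g (h u) @ restr g (h u) (restr h u z)"
    using assms by (simp add: tree_automorphism_append)
  then show "restr (g \<circ> h) u z = (restr g (h u) \<circ> restr h u) z"
    using assms by (simp add: restr_def tree_automorphism_length)
qed

lemma tree_automorphism_id: "tree_automorphism id"
  by (simp add: tree_automorphism_def)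

lemma tree_automorphism_comp:
  assumes g: "tree_automorphism g" and h: "tree_automorphism h"
  shows "tree_automorphism (g \<circ> h)"
proof -
  have "take (length u) (g (h (u @ v))) = g (h u)" for u v
    using tree_automorphism_take[OF g] tree_automorphism_take[OF h]
    by (metis append_eq_conv_conj)
  then show ?thesis
    using assms by (simp add: tree_automorphism_def bij_comp)
qed

lemma tree_automorphism_inv:
  assumes g: "tree_automorphism g"
  shows "tree_automorphism (inv g)"
proof -
  have "bij g" using g by (simp add: tree_automorphism_def)
  then have g_inv: "g (inv g x) = x" and inv_g: "inv g (g x) = x" for x
    by (simp_all add: bij_is_surj surj_f_inv_f bij_is_inj)
  have length_inv: "length (inv g u) = length u" for u
    by (metis g_inv g tree_automorphism_length)
  have "take (length u) (inv g (u @ v)) = inv g u" for u v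
  proof -
    have "g (take (length u) (inv g (u @ v))) = u"
      using tree_automorphism_take[OF g] g_inv by (metis append_eq_conv_conj)
    then show ?thesis using inv_g by metis
  qed
  then show ?thesis
    using \<open>bij g\<close> length_inv by (simp add: tree_automorphism_def bij_imp_bij_inv)
qed

lemma restr_inv:
  assumes "tree_automorphism g" and "restr g (inv g u) = \<sigma>" and "\<sigma> \<circ> \<sigma> = id"
  shows "restr (inv g) u = \<sigma>"
proof -
  have "bij g" using assms(1) by (simp add: tree_automorphism_def)
  then have "g \<circ> inv g = id"
    using bij_is_surj surj_iff by blast
  then have "restr (g \<circ> inv g) u = id"
    by simp
  then have "\<sigma> \<circ> restr (inv g) u = id"
    using assms restr_comp[OF assms(1) tree_automorphism_inv] by simp
  then have "(\<sigma> \<circ> \<sigma>) \<circ> restr (inv g) u = \<sigma>"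
    by (simp add: comp_assoc)
  then show ?thesis
    using assms(3) by simp
qed

lemma a_act_a_act [simp]: "a_act (a_act w) = w"
  by (cases w) auto

lemma length_a_act [simp]: "length (a_act w) = length w"
  by (cases w) auto

lemma restr_a_act_Cons [simp]: "restr a_act (x # u) = id"
  by (simp add: restr_def fun_eq_iff)

lemma tree_automorphism_a_act: "tree_automorphism a_act"
proof -
  have "take (length u) (a_act (u @ v)) = a_act u" for u v
    by (cases u) auto
  then show ?thesis
    by (simp add: tree_automorphism_def) (metis a_act_a_act bijI')
qed

lemma iota_iota [simp]: "iota f n \<beta> (iota f n \<beta> w) = w"
proof (induction w arbitrary: \<beta>)
  case (Cons x w)
  then show ?case by (cases x) auto
qed simp

lemma length_iota [simp]: "length (iota f n \<beta> w) = length w"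
proof (induction w arbitrary: \<beta>)
  case (Cons x w)
  then show ?case by (cases x) auto
qed simp

lemma tree_automorphism_iota: "tree_automorphism (iota f n \<beta>)"
proof -
  have "take (length u) (iota f n \<beta> (u @ v)) = iota f n \<beta> u" for u v
  proof (induction u arbitrary: \<beta>)
    case (Cons x u)
    then show ?case by (cases x; cases u) auto
  qed simp
  then show ?thesis
    by (simp add: tree_automorphism_def) (metis iota_iota bijI')
qed

lemma Ggroup_tree_automorphism: "g \<in> Ggroup f n \<Longrightarrow> tree_automorphism g"
  by (induction rule: Ggroup.induct)
    (blast intro: tree_automorphism_id tree_automorphism_a_act tree_automorphism_iota
      tree_automorphism_comp tree_automorphism_inv)+

lemma iota_replicate_True:
  "iota f n \<beta> (replicate t True @ z) = replicate t True @ iota f n ((alpha_mult f ^^ t) \<beta>) z"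
  by (induction t arbitrary: \<beta>) (auto simp: funpow_swap1)

lemma restr_iota_replicate_True:
  "restr (iota f n \<beta>) (replicate t True) = iota f n ((alpha_mult f ^^ t) \<beta>)"
  by (simp add: restr_def fun_eq_iff iota_replicate_True)

lemma iota_after_False:
  "iota f n \<beta> (u @ False # c # z) = iota f n \<beta> (u @ [False, c]) @ z"
proof (induction u arbitrary: \<beta>)
  case (Cons x u)
  then show ?case by (cases x; cases u) auto
qed simp

lemma restr_iota_after_False: "restr (iota f n \<beta>) (u @ False # c # v) = id"
  using iota_after_False[of f n \<beta> u c "v @ _"] by (simp add: restr_def fun_eq_iff)

lemma length_pref [simp]: "length (pref w k) = k"
  by (simp add: pref_def)

lemma nth_pref: "i < k \<Longrightarrow> pref w k ! i = w i"
  by (simp add: pref_def)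

lemma take_pref: "k \<le> K \<Longrightarrow> take k (pref w K) = pref w k"
  by (simp add: pref_def take_map)

lemma pref_append: "k \<le> K \<Longrightarrow> pref w K = pref w k @ map w [k..<K]"
  unfolding pref_def by (metis le_add_diff_inverse map_append upt_add_eq_append zero_le)

lemma pref_eq_mono: "pref w K = pref w' K \<Longrightarrow> k \<le> K \<Longrightarrow> pref w k = pref w' k"
  by (metis take_pref)

lemma pref_eqI: "(\<And>K. pref w K = pref w' K) \<Longrightarrow> w = w'"
proof
  fix i
  assume "\<And>K. pref w K = pref w' K"
  then have "pref w (Suc i) ! i = pref w' (Suc i) ! i"
    by simp
  then show "w i = w' i"
    by (simp add: nth_pref)
qed

lemma conc_pref_sfx:
  assumes "pref w (length u) = u"
  shows "conc u (sfx (length u) w) = w"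
proof
  fix k
  show "conc u (sfx (length u) w) k = w k"
    using nth_pref[of k "length u" w] assms by (simp add: conc_def sfx_def)
qed

lemma pref_conc: "k \<le> length u \<Longrightarrow> pref (conc u v) k = take k u"
  by (intro nth_equalityI) (auto simp: nth_pref conc_def)

lemma pref_conc_add: "pref (conc u v) (length u + d) = u @ pref v d"
  by (intro nth_equalityI) (auto simp: nth_pref conc_def nth_append)

lemma cyl_iff: "w \<in> cyl u \<longleftrightarrow> pref w (length u) = u"
  using conc_pref_sfx[of w u, symmetric] pref_conc[of "length u" u] by (auto simp: cyl_def)

lemma conc_in_cyl: "conc u v \<in> cyl u"
  by (auto simp: cyl_def)

lemma in_cyl_pref: "w \<in> cyl (pref w K)"
  by (simp add: cyl_iff)

lemma in_cyl_Nil [simp]: "w \<in> cyl []"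
  by (simp add: cyl_iff pref_def)

lemma cyl_pref_subset: "w \<in> cyl \<mu> \<Longrightarrow> length \<mu> \<le> K \<Longrightarrow> cyl (pref w K) \<subseteq> cyl \<mu>"
  by (auto simp: cyl_iff) (metis pref_eq_mono)

lemma cantor_open_cyl: "cantor_open (cyl u)"
  unfolding cantor_open_def using cyl_pref_subset by blast

lemma pref_ones: "pref ones k = replicate k True"
  by (intro nth_equalityI) (auto simp: nth_pref ones_def)

lemma pref_act_inf:
  assumes "tree_automorphism h"
  shows "pref (act_inf h w) t = h (pref w t)"
proof (rule nth_equalityI)
  fix k assume "k < length (pref (act_inf h w) t)"
  then have "k < t" by simp
  then have "take (Suc k) (h (pref w t)) = h (pref w (Suc k))"
    by (simp add: tree_automorphism_take[OF assms] take_pref)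
  then show "pref (act_inf h w) t ! k = h (pref w t) ! k"
    using \<open>k < t\<close> by (metis act_inf_def lessI nth_pref nth_take)
qed (simp add: tree_automorphism_length[OF assms])

definition branch :: "nat \<Rightarrow> iword \<Rightarrow> iword" where
  "branch j v = conc (replicate j True @ [False]) v"

lemma pref_branch_le: "k \<le> j \<Longrightarrow> pref (branch j v) k = replicate k True"
  by (simp add: branch_def pref_conc)

lemma pref_branch:
  assumes "j + 2 \<le> k"
  obtains r where "pref (branch j v) k = replicate j True @ False # v 0 # r"
proof -
  have k: "k = length (replicate j True @ [False]) + Suc (k - (j + 2))"
    using assms by simp
  have "pref v (Suc d) = v 0 # pref (sfx 1 v) d" for d
    by (intro nth_equalityI) (auto simp: nth_pref sfx_def nth_Cons split: nat.split)
  then have "pref (branch j v) k = replicate j True @ False # v 0 # pref (sfx 1 v) (k - (j + 2))"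
    unfolding branch_def by (subst k, subst pref_conc_add) simp
  then show ?thesis
    by (rule that)
qed

lemma branch_in_cyl: "branch j v \<in> cyl (replicate j True @ [False])"
  unfolding branch_def by (rule conc_in_cyl)

lemma cyl_branch: "w \<in> cyl (replicate j True @ [False]) \<Longrightarrow> \<exists>v. w = branch j v"
  by (auto simp: cyl_def branch_def)

section \<open>The field F_2[x]/(f) and trace sequences\<close>

lemma CHAR_bit: "CHAR(bit) = 2"
proof (rule CHAR_eqI)
  have "of_nat k = (0 :: bit) \<longleftrightarrow> even k" for k
    by (induction k) auto
  then show "of_nat 2 = (0 :: bit)" and "of_nat k = (0 :: bit) \<Longrightarrow> 2 dvd k" for k
    by simp_all
qed

lemma bit_poly_add_self [simp]: "(p :: bit poly) + p = 0"
proof -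
  have "(of_nat 2 :: bit poly) = 0"
    by (subst of_nat_eq_0_iff_char_dvd) (simp add: CHAR_bit)
  then show ?thesis
    by (metis mult_2 mult_zero_left of_nat_numeral)
qed

lemma bit_poly_power_two_pow_add:
  "((p :: bit poly) + q) ^ (2 ^ i) = p ^ (2 ^ i) + q ^ (2 ^ i)"
  by (rule freshmans_dream') (simp_all add: CHAR_bit)

lemma bit_poly_sum_power2: "(\<Sum>i\<in>A. (g i :: bit poly)) ^ 2 = (\<Sum>i\<in>A. g i ^ 2)"
  by (rule freshmans_dream_sum) (simp_all add: CHAR_bit)

lemma mod_add_mod_add_cancel:
  fixes l e m :: nat
  assumes "l < m" and "e \<le> m"
  shows "((l + e) mod m + (m - e)) mod m = l"
proof -
  have "((l + e) mod m + (m - e)) mod m = (l + e + (m - e)) mod m"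
    by (rule mod_add_left_eq)
  also have "l + e + (m - e) = l + m"
    using assms(2) by simp
  finally show ?thesis
    using assms(1) by simp
qed

locale gf2n =
  fixes f :: "bit poly" and n :: nat
  assumes n_ge_2: "n \<ge> 2" and primitive: "primitive_poly f n"
begin

abbreviation N :: nat where "N \<equiv> 2 ^ n - 1"
abbreviation F :: "bit poly set" where "F \<equiv> field_elems f"
abbreviation \<alpha> :: "bit poly" where "\<alpha> \<equiv> [:0, 1:]"
abbreviation tr :: "bit poly \<Rightarrow> bit poly" where "tr \<equiv> trace f n"

lemma degree_f: "degree f = n"
  using primitive by (simp add: primitive_poly_def)

lemma f_nonzero: "f \<noteq> 0"
  using degree_f n_ge_2 by auto

lemma alpha_pow_N: "\<alpha> ^ N mod f = 1"
  using primitive by (simp add: primitive_poly_def)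

lemma alpha_pow_ne_1: "0 < k \<Longrightarrow> k < N \<Longrightarrow> \<alpha> ^ k mod f \<noteq> 1"
  using primitive by (simp add: primitive_poly_def)

lemma N_pos: "0 < N"
proof -
  have "(2::nat) ^ 2 \<le> 2 ^ n" using n_ge_2 by (rule power_increasing) simp
  then show ?thesis by simp
qed

lemma le_add_mult_N: "k \<le> l + k * N"
proof -
  have "k * 1 \<le> k * N"
    using N_pos by (intro mult_le_mono2) simp
  then show ?thesis
    by linarith
qed

lemma field_elems_iff: "\<beta> \<in> F \<longleftrightarrow> \<beta> mod f = \<beta>"
  by (auto simp: field_elems_def)

lemma mod_in_F [simp]: "\<beta> mod f \<in> F"
  by (simp add: field_elems_iff)

lemma zero_in_F [simp]: "0 \<in> F"
  by (simp add: field_elems_iff)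

lemma add_in_F: "\<beta> \<in> F \<Longrightarrow> \<gamma> \<in> F \<Longrightarrow> \<beta> + \<gamma> \<in> F"
  by (simp add: field_elems_iff poly_mod_add_left)

lemma one_mod_f [simp]: "1 mod f = 1"
  using degree_f n_ge_2 by (intro mod_poly_less) auto

lemma one_in_F [simp]: "1 \<in> F"
  by (simp add: field_elems_iff)

lemma alpha_pow_mult_N: "\<alpha> ^ (q * N) mod f = 1"
proof -
  have "\<alpha> ^ (q * N) mod f = (\<alpha> ^ N) ^ q mod f"
    by (metis power_mult mult.commute)
  also have "\<dots> = (\<alpha> ^ N mod f) ^ q mod f"
    by (simp add: power_mod)
  finally show ?thesis
    using alpha_pow_N by simp
qed

lemma alpha_pow_add_mult_N: "(\<alpha> ^ (k + q * N) * \<beta>) mod f = (\<alpha> ^ k * \<beta>) mod f"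
proof -
  have "\<alpha> ^ (k + q * N) * \<beta> = (\<alpha> ^ k * \<beta>) * \<alpha> ^ (q * N)"
    by (simp add: power_add ac_simps)
  then have "(\<alpha> ^ (k + q * N) * \<beta>) mod f = ((\<alpha> ^ k * \<beta>) * (\<alpha> ^ (q * N) mod f)) mod f"
    by (simp only: mod_mult_right_eq)
  then show ?thesis
    using alpha_pow_mult_N by simp
qed

lemma alpha_pow_mod_N: "(\<alpha> ^ k * \<beta>) mod f = (\<alpha> ^ (k mod N) * \<beta>) mod f"
  using alpha_pow_add_mult_N[of "k mod N" "k div N" \<beta>] by (simp add: mult.commute)

lemma alpha_pow_mod_nonzero: "\<alpha> ^ k mod f \<noteq> 0"
proof
  assume zero: "\<alpha> ^ k mod f = 0"
  obtain M where "N = Suc M"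
    using N_pos gr0_implies_Suc by blast
  then have "k * N = k + k * M"
    by simp
  then have "\<alpha> ^ (k * N) mod f = (\<alpha> ^ k mod f * \<alpha> ^ (k * M)) mod f"
    by (simp only: mod_mult_left_eq power_add)
  also have "\<dots> = 0"
    by (simp only: zero mult_zero_left mod_0)
  finally show False
    using alpha_pow_mult_N[of k] by simp
qed

lemma alpha_pow_mod_inj:
  assumes "k < l" and "l < N"
  shows "\<alpha> ^ k mod f \<noteq> \<alpha> ^ l mod f"
proof
  assume eq: "\<alpha> ^ k mod f = \<alpha> ^ l mod f"
  have "\<alpha> ^ (k + (N - l)) mod f = (\<alpha> ^ k mod f * \<alpha> ^ (N - l)) mod f"
    by (simp add: power_add mod_mult_left_eq)
  also have "\<dots> = (\<alpha> ^ l mod f * \<alpha> ^ (N - l)) mod f"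
    using eq by simp
  also have "\<dots> = \<alpha> ^ (l + (N - l)) mod f"
    by (simp add: power_add mod_mult_left_eq)
  also have "\<dots> = 1"
    using alpha_pow_N assms by simp
  finally have "\<alpha> ^ (k + (N - l)) mod f = 1" .
  moreover have "0 < k + (N - l)" and "k + (N - l) < N"
    using assms by linarith+
  ultimately show False
    using alpha_pow_ne_1 by simp
qed

lemma alpha_mult_in_F [simp]: "alpha_mult f \<beta> \<in> F"
  by (simp add: alpha_mult_def)

lemma alpha_mult_add: "alpha_mult f (\<beta> + \<gamma>) = alpha_mult f \<beta> + alpha_mult f \<gamma>"
  unfolding alpha_mult_def distrib_left by (rule poly_mod_add_left)

lemma funpow_alpha_mult: "\<beta> \<in> F \<Longrightarrow> (alpha_mult f ^^ k) \<beta> = (\<alpha> ^ k * \<beta>) mod f"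
proof (induction k)
  case 0
  then show ?case by (simp add: field_elems_iff)
next
  case (Suc k)
  then have "(alpha_mult f ^^ Suc k) \<beta> = alpha_mult f ((\<alpha> ^ k * \<beta>) mod f)"
    by simp
  also have "\<dots> = (\<alpha> * ((\<alpha> ^ k * \<beta>) mod f)) mod f"
    by (simp only: alpha_mult_def)
  also have "\<dots> = (\<alpha> ^ Suc k * \<beta>) mod f"
    by (simp only: mod_mult_right_eq power_Suc mult.assoc)
  finally show ?case .
qed

lemma funpow_alpha_mult_in_F: "\<beta> \<in> F \<Longrightarrow> (alpha_mult f ^^ k) \<beta> \<in> F"
  by (simp add: funpow_alpha_mult)

lemma funpow_alpha_mult_period:
  assumes "\<beta> \<in> F"
  shows "(alpha_mult f ^^ (k + q * N)) \<beta> = (alpha_mult f ^^ k) \<beta>"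
proof -
  have "(alpha_mult f ^^ (k + q * N)) \<beta> = (\<alpha> ^ (k + q * N) * \<beta>) mod f"
    using assms by (rule funpow_alpha_mult)
  also have "\<dots> = (\<alpha> ^ k * \<beta>) mod f"
    by (rule alpha_pow_add_mult_N)
  also have "\<dots> = (alpha_mult f ^^ k) \<beta>"
    using assms by (rule funpow_alpha_mult[symmetric])
  finally show ?thesis .
qed

lemma funpow_alpha_mult_surj:
  assumes "\<beta>' \<in> F"
  obtains \<beta> where "\<beta> \<in> F" and "(alpha_mult f ^^ k) \<beta> = \<beta>'"
proof
  show "(alpha_mult f ^^ (k * N - k)) \<beta>' \<in> F"
    using assms by (rule funpow_alpha_mult_in_F)
  have "k + (k * N - k) = 0 + k * N"
    using le_add_mult_N[of k 0] by simp
  then have "(alpha_mult f ^^ k) ((alpha_mult f ^^ (k * N - k)) \<beta>') = (alpha_mult f ^^ (0 + k * N)) \<beta>'"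
    by (metis funpow_add comp_apply)
  also have "\<dots> = \<beta>'"
    using funpow_alpha_mult_period[OF assms, of 0 k] by simp
  finally show "(alpha_mult f ^^ k) ((alpha_mult f ^^ (k * N - k)) \<beta>') = \<beta>'" .
qed

lemma finite_F: "finite F" and card_F_le: "card F \<le> 2 ^ n"
proof -
  define coeffs_n where "coeffs_n p = map (coeff p) [0..<n]" for p :: "bit poly"
  have degree_less: "degree p < n" if "p \<in> F" "p \<noteq> 0" for p
    using that degree_mod_less'[OF f_nonzero, of p] degree_f by (simp add: field_elems_iff)
  have inj: "inj_on coeffs_n F"
  proof (rule inj_onI)
    fix p q assume p: "p \<in> F" and q: "q \<in> F" and eq: "coeffs_n p = coeffs_n q"
    show "p = q"
    proof (rule poly_eqI)
      fix i
      show "coeff p i = coeff q i"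
      proof (cases "i < n")
        case True
        then show ?thesis
          using eq unfolding coeffs_n_def by (metis add_0 diff_zero nth_map_upt)
      next
        case False
        have "coeff p i = 0"
          using degree_less[OF p] False by (cases "p = 0") (auto intro: coeff_eq_0)
        moreover have "coeff q i = 0"
          using degree_less[OF q] False by (cases "q = 0") (auto intro: coeff_eq_0)
        ultimately show ?thesis by simp
      qed
    qed
  qed
  have UNIV_bit: "(UNIV :: bit set) = {0, 1}"
    by (auto intro: bit.exhaust)
  define L where "L = {xs :: bit list. set xs \<subseteq> UNIV \<and> length xs = n}"
  have sub: "coeffs_n ` F \<subseteq> L"
    by (auto simp: L_def coeffs_n_def)
  have "finite L"
    unfolding L_def by (rule finite_lists_length_eq) (simp add: UNIV_bit)
  moreover have "card L = card (UNIV :: bit set) ^ n"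
    unfolding L_def by (rule card_lists_length_eq) (simp add: UNIV_bit)
  moreover have "card (UNIV :: bit set) = 2"
    by (simp add: UNIV_bit)
  ultimately show "finite F" and "card F \<le> 2 ^ n"
    using inj_on_finite[OF inj sub] card_inj_on_le[OF inj sub] by auto
qed

lemma F_nonzero_alpha_pow:
  assumes "\<beta> \<in> F" and "\<beta> \<noteq> 0"
  obtains k where "k < N" and "\<beta> = \<alpha> ^ k mod f"
proof -
  let ?P = "(\<lambda>k. \<alpha> ^ k mod f) ` {..<N}"
  have sub: "?P \<subseteq> F - {0}"
  proof
    fix x assume "x \<in> ?P"
    then obtain k where "x = \<alpha> ^ k mod f" by blast
    then show "x \<in> F - {0}"
      using alpha_pow_mod_nonzero[of k] by simp
  qed
  have "inj_on (\<lambda>k. \<alpha> ^ k mod f) {..<N}"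
    by (rule inj_onI) (metis alpha_pow_mod_inj lessThan_iff linorder_neqE_nat)
  then have "card ?P = N"
    by (simp add: card_image)
  moreover have "card (F - {0}) \<le> N"
    using card_F_le finite_F by (simp add: card_Diff_singleton)
  moreover have "card ?P \<le> card (F - {0})"
    using sub finite_F by (intro card_mono) auto
  ultimately have "?P = F - {0}"
    using sub finite_F by (intro card_subset_eq) auto
  then have "\<beta> \<in> ?P"
    using assms by blast
  then show ?thesis
    using that by blast
qed

lemma trace_in_F [simp]: "tr \<beta> \<in> F"
  by (simp add: trace_def)

lemma trace_add: "tr (\<beta> + \<gamma>) = tr \<beta> + tr \<gamma>"
  by (simp add: trace_def bit_poly_power_two_pow_add sum.distrib poly_mod_add_left)

lemma trace_zero [simp]: "tr 0 = 0"
  by (simp add: trace_def zero_power)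

lemma power_two_pow_n_mod:
  assumes "\<beta> \<in> F"
  shows "\<beta> ^ (2 ^ n) mod f = \<beta>"
proof (cases "\<beta> = 0")
  case True
  then show ?thesis by (simp add: zero_power)
next
  case False
  then obtain k where \<beta>: "\<beta> = \<alpha> ^ k mod f"
    using F_nonzero_alpha_pow assms by blast
  have "k * 2 ^ n = k + k * N"
    using N_pos by (simp add: algebra_simps)
  then have "\<beta> ^ (2 ^ n) mod f = (\<alpha> ^ (k + k * N) * 1) mod f"
    unfolding \<beta> by (simp add: power_mod flip: power_mult)
  also have "\<dots> = \<beta>"
    unfolding \<beta> by (simp only: alpha_pow_add_mult_N) simp
  finally show ?thesis .
qed

lemma trace_square_mod:
  assumes "\<beta> \<in> F"
  shows "tr \<beta> ^ 2 mod f = tr \<beta>"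
proof -
  let ?T = "\<Sum>i<n. \<beta> ^ (2 ^ i)"
  have "?T ^ 2 = (\<Sum>i<n. \<beta> ^ (2 ^ Suc i))"
    by (simp add: bit_poly_sum_power2 mult.commute flip: power_mult)
  also have "\<dots> = ?T + (\<beta> ^ (2 ^ n) + \<beta>)"
  proof -
    have shift: "\<beta> + (\<Sum>i<n. \<beta> ^ (2 ^ Suc i)) = ?T + \<beta> ^ (2 ^ n)"
      using sum.lessThan_Suc_shift[of "\<lambda>i. \<beta> ^ (2 ^ i)" n] sum.lessThan_Suc[of "\<lambda>i. \<beta> ^ (2 ^ i)" n]
      by simp
    have "(\<Sum>i<n. \<beta> ^ (2 ^ Suc i)) = \<beta> + (\<beta> + (\<Sum>i<n. \<beta> ^ (2 ^ Suc i)))"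
      by (simp flip: add.assoc)
    also have "\<dots> = ?T + (\<beta> ^ (2 ^ n) + \<beta>)"
      by (simp only: shift ac_simps)
    finally show ?thesis .
  qed
  finally have "?T ^ 2 mod f = (?T + (\<beta> ^ (2 ^ n) + \<beta>) mod f) mod f"
    by (simp add: mod_add_right_eq)
  also have "(\<beta> ^ (2 ^ n) + \<beta>) mod f = 0"
    using power_two_pow_n_mod[OF assms] by (metis mod_add_left_eq bit_poly_add_self mod_0)
  finally show ?thesis
    by (simp add: trace_def power_mod)
qed

lemma square_mod_idem:
  assumes t: "t \<in> F" and sq: "t ^ 2 mod f = t"
  shows "t = 0 \<or> t = 1"
proof -
  have "(t * (t + 1)) mod f = (t ^ 2 mod f + t) mod f"
    by (simp add: algebra_simps power2_eq_square poly_mod_add_left)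
  then have "f dvd t * (t + 1)"
    using sq by (simp add: mod_eq_0_iff_dvd)
  moreover have "prime_elem f"
    using primitive by (simp add: primitive_poly_def field_poly_irreducible_imp_prime)
  ultimately have "f dvd t \<or> f dvd t + 1"
    by (simp add: prime_elem_dvd_mult_iff)
  moreover have "t + 1 \<in> F"
    using t by (simp add: add_in_F)
  ultimately have "t = 0 \<or> t + 1 = 0"
    using t by (metis dvd_imp_mod_0 field_elems_iff)
  then show ?thesis
    by (metis add_diff_cancel_right' bit_poly_add_self)
qed

lemma trace_0_or_1: "\<beta> \<in> F \<Longrightarrow> tr \<beta> = 0 \<or> tr \<beta> = 1"
  using square_mod_idem trace_in_F trace_square_mod by blast

definition trace_seq :: "bit poly \<Rightarrow> nat \<Rightarrow> bit poly" where
  "trace_seq \<beta> j = tr ((alpha_mult f ^^ j) \<beta>)"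

lemma trace_seq_0_or_1: "\<beta> \<in> F \<Longrightarrow> trace_seq \<beta> j = 0 \<or> trace_seq \<beta> j = 1"
  by (simp add: trace_seq_def trace_0_or_1 funpow_alpha_mult_in_F)

lemma trace_seq_zero [simp]: "trace_seq 0 = (\<lambda>_. 0)"
  by (simp add: trace_seq_def fun_eq_iff funpow_alpha_mult)

lemma trace_seq_alpha_mult: "trace_seq (alpha_mult f \<beta>) j = trace_seq \<beta> (Suc j)"
  by (simp add: trace_seq_def funpow_swap1)

lemma trace_seq_funpow_alpha_mult: "trace_seq ((alpha_mult f ^^ k) \<beta>) j = trace_seq \<beta> (j + k)"
  by (simp add: trace_seq_def funpow_add)

lemma trace_seq_period:
  assumes "\<beta> \<in> F"
  shows "trace_seq \<beta> (j + q * N) = trace_seq \<beta> j"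
  unfolding trace_seq_def funpow_alpha_mult_period[OF assms] ..

lemma trace_seq_eqI_eventually:
  assumes "\<beta> \<in> F" and "\<gamma> \<in> F" and "\<forall>\<^sub>F j in sequentially. trace_seq \<beta> j = trace_seq \<gamma> j"
  shows "trace_seq \<beta> = trace_seq \<gamma>"
proof
  fix j
  obtain K where K: "\<And>k. K \<le> k \<Longrightarrow> trace_seq \<beta> k = trace_seq \<gamma> k"
    using assms(3) by (auto simp: eventually_sequentially)
  show "trace_seq \<beta> j = trace_seq \<gamma> j"
    using K[OF le_add_mult_N] trace_seq_period assms(1,2) by metis
qed

lemma iota_cong_trace_seq: "trace_seq \<beta> = trace_seq \<gamma> \<Longrightarrow> iota f n \<beta> = iota f n \<gamma>"
proof
  fix w
  show "trace_seq \<beta> = trace_seq \<gamma> \<Longrightarrow> iota f n \<beta> w = iota f n \<gamma> w"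
  proof (induction w arbitrary: \<beta> \<gamma>)
    case (Cons x w)
    have "tr \<beta> = tr \<gamma>"
      using fun_cong[OF Cons.prems, of 0] by (simp add: trace_seq_def)
    moreover have "trace_seq (alpha_mult f \<beta>) = trace_seq (alpha_mult f \<gamma>)"
      using Cons.prems by (simp add: fun_eq_iff trace_seq_alpha_mult)
    then have "iota f n (alpha_mult f \<beta>) w = iota f n (alpha_mult f \<gamma>) w"
      by (rule Cons.IH)
    ultimately show ?case
      by (cases x) simp_all
  qed simp
qed

lemma iota_zero [simp]: "iota f n 0 = id"
proof
  fix w
  have "alpha_mult f 0 = 0"
    by (simp add: alpha_mult_def)
  then show "iota f n 0 w = id w"
  proof (induction w)
    case (Cons x w)
    then show ?case by (cases x) simp_all
  qed simp
qed

lemma iota_iota_add: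
  "\<beta> \<in> F \<Longrightarrow> \<gamma> \<in> F \<Longrightarrow> iota f n \<beta> (iota f n \<gamma> w) = iota f n (\<beta> + \<gamma>) w"
proof (induction w arbitrary: \<beta> \<gamma>)
  case (Cons x w)
  show ?case
  proof (cases x)
    case True
    then show ?thesis
      using Cons by (simp add: alpha_mult_add)
  next
    case False
    then show ?thesis
      using trace_0_or_1[OF Cons.prems(1)] trace_0_or_1[OF Cons.prems(2)]
      by (auto simp: trace_add)
  qed
qed simp

lemma iota_branch:
  "iota f n \<beta> (replicate j True @ False # z) =
     replicate j True @ False # (if trace_seq \<beta> j = 1 then a_act z else z)"
  by (simp add: iota_replicate_True trace_seq_def)

lemma restr_iota_eventually_iota:
  assumes "\<beta> \<in> F"
  shows "\<forall>\<^sub>F t in sequentially. \<exists>\<beta>'\<in>F. restr (iota f n \<beta>) (pref w t) = iota f n \<beta>'"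
proof (cases "w = ones")
  case True
  then show ?thesis
    using assms
    by (auto simp: pref_ones restr_iota_replicate_True funpow_alpha_mult_in_F intro!: always_eventually)
next
  case False
  then obtain p where "\<not> w p"
    by (auto simp: ones_def)
  have "restr (iota f n \<beta>) (pref w t) = iota f n 0" if "p + 2 \<le> t" for t
  proof -
    have "map w [p..<t] = w p # w (Suc p) # map w [Suc (Suc p)..<t]"
      using that by (simp add: upt_conv_Cons)
    then show ?thesis
      using pref_append[of p t w] that \<open>\<not> w p\<close> by (simp add: restr_iota_after_False)
  qed
  then show ?thesis
    unfolding eventually_sequentially using zero_in_F by blast
qed

lemma restr_comp_eventually_iota:
  assumes g: "tree_automorphism g" and h: "tree_automorphism h"
    and "\<forall>\<^sub>F t in sequentially. \<exists>\<beta>\<in>F. restr g (pref (act_inf h w) t) = iota f n \<beta>"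
    and "\<forall>\<^sub>F t in sequentially. \<exists>\<beta>\<in>F. restr h (pref w t) = iota f n \<beta>"
  shows "\<forall>\<^sub>F t in sequentially. \<exists>\<beta>\<in>F. restr (g \<circ> h) (pref w t) = iota f n \<beta>"
  using assms(3,4)
proof eventually_elim
  case (elim t)
  then obtain \<beta>1 \<beta>2 where "\<beta>1 \<in> F" "\<beta>2 \<in> F"
    and "restr g (h (pref w t)) = iota f n \<beta>1" and "restr h (pref w t) = iota f n \<beta>2"
    by (auto simp: pref_act_inf[OF h])
  then have "restr (g \<circ> h) (pref w t) = iota f n (\<beta>1 + \<beta>2)"
    by (simp add: restr_comp[OF g h] fun_eq_iff iota_iota_add)
  then show ?case
    using \<open>\<beta>1 \<in> F\<close> \<open>\<beta>2 \<in> F\<close> add_in_F by blast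
qed

lemma restr_inv_eventually_iota:
  assumes g: "tree_automorphism g"
    and "\<forall>\<^sub>F t in sequentially. \<exists>\<beta>\<in>F. restr g (pref (act_inf (inv g) w) t) = iota f n \<beta>"
  shows "\<forall>\<^sub>F t in sequentially. \<exists>\<beta>\<in>F. restr (inv g) (pref w t) = iota f n \<beta>"
  using assms(2)
proof eventually_elim
  case (elim t)
  then obtain \<beta> where "\<beta> \<in> F" and "restr g (inv g (pref w t)) = iota f n \<beta>"
    by (auto simp: pref_act_inf[OF tree_automorphism_inv[OF g]])
  then have "restr (inv g) (pref w t) = iota f n \<beta>"
    by (intro restr_inv[OF g]) (simp_all add: fun_eq_iff)
  then show ?case
    using \<open>\<beta> \<in> F\<close> by blast
qed

lemma restr_eventually_iota:
  assumes "g \<in> Ggroup f n"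
  shows "\<forall>\<^sub>F t in sequentially. \<exists>\<beta>\<in>F. restr g (pref w t) = iota f n \<beta>"
  using assms
proof (induction arbitrary: w rule: Ggroup.induct)
  case gen_id
  have "restr id (pref w t) = iota f n 0" for t
    by simp
  then show ?case
    using zero_in_F by (blast intro: always_eventually)
next
  case gen_a
  have "restr a_act (pref w t) = iota f n 0" if "1 \<le> t" for t
    using pref_append[OF that, of w] by (simp add: pref_def)
  then show ?case
    unfolding eventually_sequentially using zero_in_F by blast
next
  case (gen_iota \<beta>)
  then show ?case
    by (rule restr_iota_eventually_iota)
next
  case (gen_comp g h)
  then show ?case
    by (intro restr_comp_eventually_iota) (simp_all add: Ggroup_tree_automorphism)
next
  case (gen_inv g)
  then show ?case
    by (intro restr_inv_eventually_iota) (simp_all add: Ggroup_tree_automorphism)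
qed

lemma trace_seq_alpha_pow: "trace_seq (\<alpha> ^ e mod f) l = trace_seq 1 ((l + e) mod N)"
proof -
  have "(alpha_mult f ^^ l) (\<alpha> ^ e mod f) = (\<alpha> ^ l * (\<alpha> ^ e mod f)) mod f"
    by (rule funpow_alpha_mult[OF mod_in_F])
  also have "\<dots> = (\<alpha> ^ (l + e) * 1) mod f"
    by (simp only: mod_mult_right_eq power_add mult_1_right)
  also have "\<dots> = (alpha_mult f ^^ ((l + e) mod N)) 1"
    by (subst alpha_pow_mod_N) (rule funpow_alpha_mult[OF one_in_F, symmetric])
  finally show ?thesis
    by (simp add: trace_seq_def)
qed

lemma card_zeros_trace_seq:
  assumes "\<beta> \<in> F" and "\<beta> \<noteq> 0"
  shows "card {l\<in>{..<N}. trace_seq \<beta> l = 0} = card {l\<in>{..<N}. trace_seq 1 l = 0}"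
proof -
  obtain e where "e < N" and \<beta>: "\<beta> = \<alpha> ^ e mod f"
    using F_nonzero_alpha_pow[OF assms] by blast
  let ?s = "\<lambda>l. (l + e) mod N" and ?s' = "\<lambda>l. (l + (N - e)) mod N"
  have "bij_betw ?s {l\<in>{..<N}. trace_seq \<beta> l = 0} {l\<in>{..<N}. trace_seq 1 l = 0}"
  proof (rule bij_betw_byWitness[where f' = ?s'])
    have "?s' (?s l) = l" and "?s (?s' l) = l" if "l < N" for l
      using mod_add_mod_add_cancel[OF that, of e] mod_add_mod_add_cancel[OF that, of "N - e"] \<open>e < N\<close>
      by simp_all
    then show "\<forall>l\<in>{l\<in>{..<N}. trace_seq \<beta> l = 0}. ?s' (?s l) = l"
      and "\<forall>l\<in>{l\<in>{..<N}. trace_seq 1 l = 0}. ?s (?s' l) = l"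
      by auto
    show "?s ` {l\<in>{..<N}. trace_seq \<beta> l = 0} \<subseteq> {l\<in>{..<N}. trace_seq 1 l = 0}"
      using N_pos \<open>e < N\<close> by (auto simp: \<beta> trace_seq_alpha_pow)
    show "?s' ` {l\<in>{..<N}. trace_seq 1 l = 0} \<subseteq> {l\<in>{..<N}. trace_seq \<beta> l = 0}"
      using N_pos \<open>e < N\<close> \<open>\<And>l. l < N \<Longrightarrow> ?s (?s' l) = l\<close>
      by (auto simp: \<beta> trace_seq_alpha_pow)
  qed
  then show ?thesis
    by (rule bij_betw_same_card)
qed

lemma card_zeros_trace_seq_one_less:
  assumes "\<gamma> \<in> F" and "tr \<gamma> = 1"
  shows "card {l\<in>{..<N}. trace_seq 1 l = 0} < N"
proof -
  have "0 \<notin> {l\<in>{..<N}. trace_seq \<gamma> l = 0}"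
    using assms(2) by (simp add: trace_seq_def)
  moreover have "0 \<in> {..<N}"
    using N_pos by (rule lessThan_iff[THEN iffD2])
  ultimately have "{l\<in>{..<N}. trace_seq \<gamma> l = 0} \<subset> {..<N}"
    by blast
  then have "card {l\<in>{..<N}. trace_seq \<gamma> l = 0} < card {..<N}"
    by (rule psubset_card_mono[OF finite_lessThan])
  moreover have "\<gamma> \<noteq> 0"
    using assms(2) by auto
  ultimately show ?thesis
    using card_zeros_trace_seq[OF assms(1)] by simp
qed

lemma sum_zeros_over_period:
  fixes c :: "'i \<Rightarrow> 'k::comm_semiring_1"
  assumes I: "finite I" and b: "\<And>i. i \<in> I \<Longrightarrow> b i \<in> F"
  shows "(\<Sum>l<N. \<Sum>i | i \<in> I \<and> trace_seq (b i) l = 0. c i) =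
    of_nat N * (\<Sum>i | i \<in> I \<and> trace_seq (b i) = (\<lambda>_. 0). c i) +
    of_nat (card {l\<in>{..<N}. trace_seq 1 l = 0}) * (\<Sum>i | i \<in> I \<and> trace_seq (b i) \<noteq> (\<lambda>_. 0). c i)"
proof -
  \<comment> \<open>\<open>M\<close> hides \<open>N = 2 ^ n - 1\<close> from the simplifier, which would rewrite it inside \<open>of_nat\<close>.\<close>
  define M where "M = N"
  define C where "C = card {l\<in>{..<N}. trace_seq 1 l = 0}"
  let ?Z = "{i \<in> I. trace_seq (b i) = (\<lambda>_. 0)}" and ?Z' = "{i \<in> I. trace_seq (b i) \<noteq> (\<lambda>_. 0)}"
  let ?k = "\<lambda>i. of_nat (card {l\<in>{..<N}. trace_seq (b i) l = 0}) :: 'k"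
  have card_Z: "card {l\<in>{..<N}. trace_seq (b i) l = 0} = M" if "i \<in> ?Z" for i
    using that by (simp add: M_def)
  have card_Z': "card {l\<in>{..<N}. trace_seq (b i) l = 0} = C" if "i \<in> ?Z'" for i
  proof -
    have "b i \<noteq> 0"
      using that by auto
    then show ?thesis
      using card_zeros_trace_seq[OF b] that by (simp add: C_def)
  qed
  have "(\<Sum>l<N. \<Sum>i | i \<in> I \<and> trace_seq (b i) l = 0. c i) =
      (\<Sum>l<N. \<Sum>i\<in>I. if trace_seq (b i) l = 0 then c i else 0)"
    using I by (simp add: sum.inter_filter)
  also have "\<dots> = (\<Sum>i\<in>I. \<Sum>l<N. if trace_seq (b i) l = 0 then c i else 0)"
    by (rule sum.swap)
  also have "\<dots> = (\<Sum>i\<in>I. ?k i * c i)"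
    by (simp flip: sum.inter_filter)
  also have "\<dots> = (\<Sum>i\<in>?Z. ?k i * c i) + (\<Sum>i\<in>?Z'. ?k i * c i)"
    using I by (subst sum.union_disjoint[symmetric]) (auto intro: sum.cong)
  also have "(\<Sum>i\<in>?Z. ?k i * c i) = of_nat M * (\<Sum>i\<in>?Z. c i)"
    unfolding sum_distrib_left by (rule sum.cong) (simp_all only: card_Z)
  also have "(\<Sum>i\<in>?Z'. ?k i * c i) = of_nat C * (\<Sum>i\<in>?Z'. c i)"
    unfolding sum_distrib_left by (rule sum.cong) (simp_all only: card_Z')
  finally show ?thesis
    by (simp only: M_def C_def)
qed

lemma sum_zeros_eq_0_if_vanishing:
  assumes b: "\<And>i. i \<in> I \<Longrightarrow> b i \<in> F"
    and vanish: "\<And>j \<gamma>. J \<le> j \<Longrightarrow> \<gamma> \<in> F \<Longrightarrow> (\<Sum>i | i \<in> I \<and> trace_seq (b i) j = trace_seq \<gamma> j. c i) = 0"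
  shows "(\<Sum>i | i \<in> I \<and> trace_seq (b i) l = 0. c i) = 0"
proof -
  have "trace_seq (b i) (l + J * N) = trace_seq (b i) l" if "i \<in> I" for i
    using b[OF that] by (rule trace_seq_period)
  then show ?thesis
    using vanish[OF le_add_mult_N zero_in_F, of l] by (simp cong: conj_cong)
qed

lemma sum_eq_0_if_vanishing:
  assumes I: "finite I" and b: "\<And>i. i \<in> I \<Longrightarrow> b i \<in> F"
    and vanish: "\<And>j \<gamma>. J \<le> j \<Longrightarrow> \<gamma> \<in> F \<Longrightarrow> (\<Sum>i | i \<in> I \<and> trace_seq (b i) j = trace_seq \<gamma> j. c i) = 0"
    and "\<gamma> \<in> F" and "tr \<gamma> = 1"
  shows "(\<Sum>i\<in>I. c i) = 0"
proof -
  have "trace_seq (b i) (J * N) = trace_seq (b i) 0" if "i \<in> I" for i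
    using trace_seq_period[OF b[OF that], of 0 J] by simp
  moreover have "trace_seq \<gamma> (J * N) = 1"
    using trace_seq_period[OF \<open>\<gamma> \<in> F\<close>, of 0 J] \<open>tr \<gamma> = 1\<close> by (simp add: trace_seq_def)
  ultimately have "(\<Sum>i | i \<in> I \<and> trace_seq (b i) 0 = 1. c i) = 0"
    using vanish[OF le_add_mult_N \<open>\<gamma> \<in> F\<close>, of 0] by (simp cong: conj_cong)
  moreover have "{i \<in> I. trace_seq (b i) 0 = 1} = {i \<in> I. \<not> trace_seq (b i) 0 = 0}"
    using trace_seq_0_or_1 b by fastforce
  ultimately show ?thesis
    using sum.Int_Diff[OF I, of c "{i. trace_seq (b i) 0 = 0}"] sum_zeros_eq_0_if_vanishing[OF b vanish]
    by (simp add: Int_def set_diff_eq)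
qed

lemma sum_trace_seq_null_eq_0:
  fixes c :: "'i \<Rightarrow> 'k::field_char_0"
  assumes I: "finite I" and b: "\<And>i. i \<in> I \<Longrightarrow> b i \<in> F"
    and vanish: "\<And>j \<gamma>. J \<le> j \<Longrightarrow> \<gamma> \<in> F \<Longrightarrow> (\<Sum>i | i \<in> I \<and> trace_seq (b i) j = trace_seq \<gamma> j. c i) = 0"
  shows "(\<Sum>i | i \<in> I \<and> trace_seq (b i) = (\<lambda>_. 0). c i) = 0"
proof (cases "\<forall>\<gamma>\<in>F. tr \<gamma> = 0")
  \<comment> \<open>\<open>tr\<close> is in fact onto \<open>{0, 1}\<close>; treating this case directly avoids proving that.\<close>
  case True
  then have "trace_seq (b i) = (\<lambda>_. 0)" if "i \<in> I" for i
    using b[OF that] by (simp add: fun_eq_iff trace_seq_def funpow_alpha_mult_in_F)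
  then show ?thesis
    using vanish[of J 0] by (simp cong: conj_cong)
next
  case False
  then obtain \<gamma> where "\<gamma> \<in> F" and "tr \<gamma> = 1"
    using trace_0_or_1 by blast
  let ?S = "\<Sum>i | i \<in> I \<and> trace_seq (b i) = (\<lambda>_. 0). c i"
  define C where "C = card {l\<in>{..<N}. trace_seq 1 l = 0}"
  have "(\<Sum>i\<in>I. c i) = 0"
    using I b vanish \<open>\<gamma> \<in> F\<close> \<open>tr \<gamma> = 1\<close> by (rule sum_eq_0_if_vanishing)
  moreover have "(\<Sum>i\<in>I. c i) = ?S + (\<Sum>i | i \<in> I \<and> trace_seq (b i) \<noteq> (\<lambda>_. 0). c i)"
    using I by (subst sum.union_disjoint[symmetric]) (auto intro: sum.cong)
  ultimately have "(\<Sum>i | i \<in> I \<and> trace_seq (b i) \<noteq> (\<lambda>_. 0). c i) = - ?S"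
    by (simp add: eq_neg_iff_add_eq_0 add.commute)
  moreover have "(\<Sum>l<N. \<Sum>i | i \<in> I \<and> trace_seq (b i) l = 0. c i) = 0"
    by (simp add: sum_zeros_eq_0_if_vanishing[OF b vanish])
  moreover have "(\<Sum>l<N. \<Sum>i | i \<in> I \<and> trace_seq (b i) l = 0. c i) =
      of_nat N * ?S + of_nat C * (\<Sum>i | i \<in> I \<and> trace_seq (b i) \<noteq> (\<lambda>_. 0). c i)"
    unfolding C_def using I b by (rule sum_zeros_over_period)
  ultimately have "(of_nat N - of_nat C) * ?S = 0"
    by (simp add: algebra_simps)
  then have "of_nat N = (of_nat C :: 'k) \<or> ?S = 0"
    by (simp only: mult_eq_0_iff right_minus_eq)
  moreover have "C < N"
    unfolding C_def using \<open>\<gamma> \<in> F\<close> \<open>tr \<gamma> = 1\<close> by (rule card_zeros_trace_seq_one_less)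
  then have "(of_nat N :: 'k) \<noteq> of_nat C"
    by (simp only: of_nat_eq_iff)
  ultimately show ?thesis
    by blast
qed

end

section \<open>Germs and the topology of the groupoid\<close>

lemma eventually_sequentially_obtain_ge:
  assumes "\<forall>\<^sub>F K in sequentially. P K"
  obtains K where "k \<le> K" and "P K"
  using assms unfolding eventually_sequentially by (metis max.cobounded1 max.cobounded2)

lemma valid_rep_iff [simp]: "valid_rep f n (\<eta>, g, \<mu>, w) \<longleftrightarrow> g \<in> Ggroup f n \<and> w \<in> cyl \<mu>"
  by (simp add: valid_rep_def)

lemma germ_eq_iff:
  "germ_eq (\<eta>, g, \<mu>, w) (\<eta>', g', \<mu>', w') \<longleftrightarrow> w = w' \<and>
     (\<exists>k \<epsilon> \<epsilon>'. pref w k = \<mu> @ \<epsilon> \<and> pref w k = \<mu>' @ \<epsilon>' \<and>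
        \<eta> @ g \<epsilon> = \<eta>' @ g' \<epsilon>' \<and> restr g \<epsilon> = restr g' \<epsilon>')"
  by (simp add: germ_eq_def)

lemma germ_eq_refl: "w \<in> cyl \<mu> \<Longrightarrow> germ_eq (\<eta>, g, \<mu>, w) (\<eta>, g, \<mu>, w)"
  unfolding germ_eq_iff cyl_iff by (metis append_Nil2)

lemma germ_eq_sym: "germ_eq r r' \<Longrightarrow> germ_eq r' r"
  unfolding germ_eq_def by (cases r; cases r') (auto, metis)

lemma germ_eq_eventually:
  assumes "germ_eq (\<eta>, g, \<mu>, w) (\<eta>', g', \<mu>', w)"
    and g: "tree_automorphism g" and g': "tree_automorphism g'"
  shows "\<forall>\<^sub>F K in sequentially. \<exists>\<delta> \<delta>'. pref w K = \<mu> @ \<delta> \<and> pref w K = \<mu>' @ \<delta>' \<and>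
     \<eta> @ g \<delta> = \<eta>' @ g' \<delta>' \<and> restr g \<delta> = restr g' \<delta>'"
proof -
  obtain k \<epsilon> \<epsilon>' where pref: "pref w k = \<mu> @ \<epsilon>" "pref w k = \<mu>' @ \<epsilon>'"
    and img: "\<eta> @ g \<epsilon> = \<eta>' @ g' \<epsilon>'" and restr: "restr g \<epsilon> = restr g' \<epsilon>'"
    using assms(1) unfolding germ_eq_iff by blast
  have "\<exists>\<delta> \<delta>'. pref w K = \<mu> @ \<delta> \<and> pref w K = \<mu>' @ \<delta>' \<and>
     \<eta> @ g \<delta> = \<eta>' @ g' \<delta>' \<and> restr g \<delta> = restr g' \<delta>'" if "k \<le> K" for K
  proof (intro exI conjI)
    let ?d = "map w [k..<K]"
    show "pref w K = \<mu> @ (\<epsilon> @ ?d)" and "pref w K = \<mu>' @ (\<epsilon>' @ ?d)"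
      using pref pref_append[OF that, of w] by simp_all
    show "\<eta> @ g (\<epsilon> @ ?d) = \<eta>' @ g' (\<epsilon>' @ ?d)"
      using img restr by (simp add: tree_automorphism_append[OF g] tree_automorphism_append[OF g'])
    show "restr g (\<epsilon> @ ?d) = restr g' (\<epsilon>' @ ?d)"
      using restr by (simp add: restr_append)
  qed
  then show ?thesis
    unfolding eventually_sequentially by blast
qed

lemma germ_eq_trans:
  assumes "valid_rep f n r1" and "valid_rep f n r2" and "valid_rep f n r3"
    and "germ_eq r1 r2" and "germ_eq r2 r3"
  shows "germ_eq r1 r3"
proof -
  obtain \<eta>1 g1 \<mu>1 w where r1: "r1 = (\<eta>1, g1, \<mu>1, w)"
    by (cases r1) auto
  obtain \<eta>2 g2 \<mu>2 w2 where r2: "r2 = (\<eta>2, g2, \<mu>2, w2)"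
    by (cases r2) auto
  obtain \<eta>3 g3 \<mu>3 w3 where r3: "r3 = (\<eta>3, g3, \<mu>3, w3)"
    by (cases r3) auto
  have "w2 = w" and "w3 = w"
    using assms(4,5) by (simp_all add: r1 r2 r3 germ_eq_iff)
  have "tree_automorphism g1" "tree_automorphism g2" "tree_automorphism g3"
    using assms(1-3) by (auto simp: r1 r2 r3 intro: Ggroup_tree_automorphism)
  then have "\<forall>\<^sub>F K in sequentially.
      (\<exists>\<delta>1 \<delta>2. pref w K = \<mu>1 @ \<delta>1 \<and> pref w K = \<mu>2 @ \<delta>2 \<and>
         \<eta>1 @ g1 \<delta>1 = \<eta>2 @ g2 \<delta>2 \<and> restr g1 \<delta>1 = restr g2 \<delta>2) \<and>
      (\<exists>\<delta>2 \<delta>3. pref w K = \<mu>2 @ \<delta>2 \<and> pref w K = \<mu>3 @ \<delta>3 \<and>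
         \<eta>2 @ g2 \<delta>2 = \<eta>3 @ g3 \<delta>3 \<and> restr g2 \<delta>2 = restr g3 \<delta>3)"
    using assms(4,5) \<open>w2 = w\<close> \<open>w3 = w\<close>
    by (intro eventually_conj germ_eq_eventually) (simp_all add: r1 r2 r3)
  then obtain K where "\<exists>\<delta>1 \<delta>2. pref w K = \<mu>1 @ \<delta>1 \<and> pref w K = \<mu>2 @ \<delta>2 \<and>
         \<eta>1 @ g1 \<delta>1 = \<eta>2 @ g2 \<delta>2 \<and> restr g1 \<delta>1 = restr g2 \<delta>2"
    and "\<exists>\<delta>2 \<delta>3. pref w K = \<mu>2 @ \<delta>2 \<and> pref w K = \<mu>3 @ \<delta>3 \<and>
         \<eta>2 @ g2 \<delta>2 = \<eta>3 @ g3 \<delta>3 \<and> restr g2 \<delta>2 = restr g3 \<delta>3"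
    using eventually_sequentially_obtain_ge by blast
  then show ?thesis
    unfolding r1 r3 germ_eq_iff using \<open>w3 = w\<close> by (metis same_append_eq)
qed

lemma germ_eq_conv:
  assumes "valid_rep f n r" and "valid_rep f n r'"
  shows "germ f n r = germ f n r' \<longleftrightarrow> germ_eq r r'"
proof
  assume "germ f n r = germ f n r'"
  moreover have "r' \<in> germ f n r'"
    using assms(2) by (cases r') (simp add: germ_def germ_eq_refl)
  ultimately show "germ_eq r r'"
    unfolding germ_def by blast
next
  assume "germ_eq r r'"
  then show "germ f n r = germ f n r'"
    unfolding germ_def using germ_eq_sym germ_eq_trans assms by blast
qed

lemma src_germ:
  assumes "valid_rep f n (\<eta>, g, \<mu>, w)"
  shows "src (germ f n (\<eta>, g, \<mu>, w)) = w"
proof -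
  have "(\<eta>, g, \<mu>, w) \<in> germ f n (\<eta>, g, \<mu>, w)"
    using assms by (simp add: germ_def germ_eq_refl)
  then have "(SOME r. r \<in> germ f n (\<eta>, g, \<mu>, w)) \<in> germ f n (\<eta>, g, \<mu>, w)"
    by (rule someI)
  moreover obtain \<eta>' g' \<mu>' w' where some: "(SOME r. r \<in> germ f n (\<eta>, g, \<mu>, w)) = (\<eta>', g', \<mu>', w')"
    by (metis prod.exhaust)
  ultimately have "w' = w"
    by (simp add: germ_def germ_eq_iff)
  then show ?thesis
    by (simp add: src_def some)
qed

definition germ_set ::
    "bit poly \<Rightarrow> nat \<Rightarrow> bool list \<Rightarrow> (bool list \<Rightarrow> bool list) \<Rightarrow> bool list \<Rightarrow> iword set \<Rightarrow> rep set set"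
  where "germ_set f n \<eta> g \<mu> U = {germ f n (\<eta>, g, \<mu>, w) | w. w \<in> U}"

lemma openin_germ_set:
  "g \<in> Ggroup f n \<Longrightarrow> U \<subseteq> cyl \<mu> \<Longrightarrow> cantor_open U \<Longrightarrow> openin (Gtop f n) (germ_set f n \<eta> g \<mu> U)"
  unfolding Gtop_def by (rule topology_generated_by_Basis) (auto simp: basic_sets_def germ_set_def)

lemma topspace_GtopE:
  assumes "x \<in> topspace (Gtop f n)"
  obtains \<eta> g \<mu> w where "valid_rep f n (\<eta>, g, \<mu>, w)" and "x = germ f n (\<eta>, g, \<mu>, w)"
  using assms unfolding Gtop_def topology_generated_by_topspace basic_sets_def by auto

lemma germ_eq_locally:
  assumes "valid_rep f n (\<eta>, g, \<mu>, w)" and "valid_rep f n (\<eta>', g', \<mu>', w)"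
    and "germ f n (\<eta>, g, \<mu>, w) = germ f n (\<eta>', g', \<mu>', w)"
  obtains K where "\<And>w'. pref w' K = pref w K \<Longrightarrow> germ f n (\<eta>, g, \<mu>, w') = germ f n (\<eta>', g', \<mu>', w')"
proof -
  obtain k \<epsilon> \<epsilon>' where wit: "pref w k = \<mu> @ \<epsilon>" "pref w k = \<mu>' @ \<epsilon>'"
      "\<eta> @ g \<epsilon> = \<eta>' @ g' \<epsilon>'" "restr g \<epsilon> = restr g' \<epsilon>'"
    using assms germ_eq_conv[OF assms(1,2)] by (auto simp: germ_eq_iff)
  define K where "K = max k (max (length \<mu>) (length \<mu>'))"
  have "germ f n (\<eta>, g, \<mu>, w') = germ f n (\<eta>', g', \<mu>', w')" if "pref w' K = pref w K" for w'
  proof -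
    have "pref w' k = pref w k" "pref w' (length \<mu>) = pref w (length \<mu>)"
      "pref w' (length \<mu>') = pref w (length \<mu>')"
      using pref_eq_mono[OF that] by (simp_all add: K_def)
    then have "valid_rep f n (\<eta>, g, \<mu>, w')" and "valid_rep f n (\<eta>', g', \<mu>', w')"
      and "germ_eq (\<eta>, g, \<mu>, w') (\<eta>', g', \<mu>', w')"
      using assms(1,2) wit by (auto simp: cyl_iff germ_eq_iff) metis
    then show ?thesis
      by (simp add: germ_eq_conv)
  qed
  then show ?thesis
    using that by blast
qed

definition pref_open :: "bit poly \<Rightarrow> nat \<Rightarrow> rep set set \<Rightarrow> bool" where
  "pref_open f n U \<longleftrightarrow> (\<forall>\<eta> g \<mu> w. valid_rep f n (\<eta>, g, \<mu>, w) \<longrightarrow> germ f n (\<eta>, g, \<mu>, w) \<in> U \<longrightarrow>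
     (\<exists>K. \<forall>w'. pref w' K = pref w K \<longrightarrow> germ f n (\<eta>, g, \<mu>, w') \<in> U))"

lemma pref_open_Int:
  assumes "pref_open f n U" and "pref_open f n V"
  shows "pref_open f n (U \<inter> V)"
  unfolding pref_open_def
proof (intro allI impI)
  fix \<eta> g \<mu> w
  assume "valid_rep f n (\<eta>, g, \<mu>, w)" and "germ f n (\<eta>, g, \<mu>, w) \<in> U \<inter> V"
  then obtain K1 K2
    where K1: "\<forall>w'. pref w' K1 = pref w K1 \<longrightarrow> germ f n (\<eta>, g, \<mu>, w') \<in> U"
      and K2: "\<forall>w'. pref w' K2 = pref w K2 \<longrightarrow> germ f n (\<eta>, g, \<mu>, w') \<in> V"
    using assms unfolding pref_open_def by blast
  have "germ f n (\<eta>, g, \<mu>, w') \<in> U \<inter> V" if "pref w' (max K1 K2) = pref w (max K1 K2)" for w'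
    using K1 K2 pref_eq_mono[OF that, of K1] pref_eq_mono[OF that, of K2] by simp
  then show "\<exists>K. \<forall>w'. pref w' K = pref w K \<longrightarrow> germ f n (\<eta>, g, \<mu>, w') \<in> U \<inter> V"
    by blast
qed

lemma pref_open_Union:
  assumes "\<And>V. V \<in> \<U> \<Longrightarrow> pref_open f n V"
  shows "pref_open f n (\<Union>\<U>)"
  unfolding pref_open_def
proof (intro allI impI)
  fix \<eta> g \<mu> w
  assume valid: "valid_rep f n (\<eta>, g, \<mu>, w)" and "germ f n (\<eta>, g, \<mu>, w) \<in> \<Union>\<U>"
  then obtain V where "V \<in> \<U>" and "germ f n (\<eta>, g, \<mu>, w) \<in> V"
    by blast
  then obtain K where "\<forall>w'. pref w' K = pref w K \<longrightarrow> germ f n (\<eta>, g, \<mu>, w') \<in> V"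
    using assms valid unfolding pref_open_def by blast
  then show "\<exists>K. \<forall>w'. pref w' K = pref w K \<longrightarrow> germ f n (\<eta>, g, \<mu>, w') \<in> \<Union>\<U>"
    using \<open>V \<in> \<U>\<close> by blast
qed

lemma pref_open_germ_set:
  assumes g': "g' \<in> Ggroup f n" and U': "U' \<subseteq> cyl \<mu>'" "cantor_open U'"
  shows "pref_open f n (germ_set f n \<eta>' g' \<mu>' U')"
  unfolding pref_open_def
proof (intro allI impI)
  fix \<eta> g \<mu> w
  assume valid: "valid_rep f n (\<eta>, g, \<mu>, w)" and "germ f n (\<eta>, g, \<mu>, w) \<in> germ_set f n \<eta>' g' \<mu>' U'"
  then obtain w0 where "w0 \<in> U'" and eq: "germ f n (\<eta>, g, \<mu>, w) = germ f n (\<eta>', g', \<mu>', w0)"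
    by (auto simp: germ_set_def)
  moreover have valid0: "valid_rep f n (\<eta>', g', \<mu>', w0)"
    using \<open>w0 \<in> U'\<close> U' g' by auto
  ultimately have "w0 = w"
    using src_germ valid by metis
  then obtain K1 where K1: "\<And>w'. pref w' K1 = pref w K1 \<Longrightarrow>
      germ f n (\<eta>, g, \<mu>, w') = germ f n (\<eta>', g', \<mu>', w')"
    using germ_eq_locally[OF valid] valid0 eq by blast
  obtain K2 where K2: "cyl (pref w K2) \<subseteq> U'"
    using U'(2) \<open>w0 \<in> U'\<close> \<open>w0 = w\<close> by (auto simp: cantor_open_def)
  have "germ f n (\<eta>, g, \<mu>, w') \<in> germ_set f n \<eta>' g' \<mu>' U'"
    if "pref w' (max K1 K2) = pref w (max K1 K2)" for w'
  proof -
    have "w' \<in> U'"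
      using K2 pref_eq_mono[OF that, of K2] by (auto simp: cyl_iff)
    then show ?thesis
      using K1 pref_eq_mono[OF that, of K1] by (auto simp: germ_set_def)
  qed
  then show "\<exists>K. \<forall>w'. pref w' K = pref w K \<longrightarrow> germ f n (\<eta>, g, \<mu>, w') \<in> germ_set f n \<eta>' g' \<mu>' U'"
    by blast
qed

lemma openin_Gtop_pref_open:
  assumes "openin (Gtop f n) U"
  shows "pref_open f n U"
proof -
  have "generate_topology_on (basic_sets f n) U"
    using assms by (simp add: Gtop_def openin_topology_generated_by_iff)
  then show ?thesis
  proof (induction rule: generate_topology_on.induct)
    case Empty
    then show ?case by (simp add: pref_open_def)
  next
    case (Int a b)
    then show ?case by (intro pref_open_Int)
  next
    case (UN \<U>)
    then show ?case by (intro pref_open_Union)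
  next
    case (Basis s)
    then show ?case
      by (auto simp: basic_sets_def germ_set_def[symmetric] intro: pref_open_germ_set)
  qed
qed

lemma openin_Gtop_pref_nbhd:
  assumes "openin (Gtop f n) U" and "valid_rep f n (\<eta>, g, \<mu>, w)" and "germ f n (\<eta>, g, \<mu>, w) \<in> U"
  obtains K where "\<And>w'. pref w' K = pref w K \<Longrightarrow> germ f n (\<eta>, g, \<mu>, w') \<in> U"
  using openin_Gtop_pref_open[OF assms(1)] assms(2,3) that unfolding pref_open_def by blast

lemma compactin_nested_closure_of:
  fixes T :: "nat \<Rightarrow> 'a set"
  assumes "compactin X S" and "\<And>K. T K \<subseteq> S" and "\<And>K. T K \<noteq> {}"
    and "\<And>K L. K \<le> L \<Longrightarrow> T L \<subseteq> T K"
  obtains y where "y \<in> S" and "\<And>K. y \<in> X closure_of T K"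
proof -
  have S: "S \<subseteq> topspace X"
    using assms(1) by (rule compactin_subset_topspace)
  have "S \<inter> \<Inter>\<F> \<noteq> {}"
    if fin: "finite \<F>" and sub: "\<F> \<subseteq> range (\<lambda>K. X closure_of T K)" for \<F>
  proof -
    obtain A where "finite A" and \<F>: "\<F> = (\<lambda>K. X closure_of T K) ` A"
      using finite_subset_image[OF fin sub] by blast
    define M where "M = Max (insert 0 A)"
    have "T M \<subseteq> X closure_of T K" if "K \<in> A" for K
    proof -
      have "K \<le> M"
        using \<open>finite A\<close> that by (simp add: M_def)
      then have "T M \<subseteq> T K"
        by (rule assms(4))
      also have "\<dots> \<subseteq> X closure_of T K"
        using assms(2) S by (intro closure_of_subset) blast
      finally show ?thesis .
    qed
    then have "T M \<subseteq> S \<inter> \<Inter>\<F>"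
      using assms(2) \<F> by blast
    then show ?thesis
      using assms(3) by blast
  qed
  moreover have "\<forall>C\<in>range (\<lambda>K. X closure_of T K). closedin X C"
    by auto
  ultimately have "S \<inter> \<Inter>(range (\<lambda>K. X closure_of T K)) \<noteq> {}"
    using assms(1) unfolding compactin_fip by blast
  then show ?thesis
    using that by blast
qed

section \<open>The germs along 1^j 0 v and at 1^infinity\<close>

context gf2n
begin

definition ygerm :: "bit poly \<Rightarrow> rep set" where
  "ygerm \<beta> = germ f n ([], iota f n \<beta>, [], ones)"

definition xgerm :: "nat \<Rightarrow> bit poly \<Rightarrow> iword \<Rightarrow> rep set" where
  "xgerm j \<gamma> v = germ f n ([], iota f n \<gamma>, [], branch j v)"

declare Ggroup.gen_iota [simp]

lemma valid_rep_iota: "\<beta> \<in> F \<Longrightarrow> valid_rep f n ([], iota f n \<beta>, [], w)"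
  by simp

lemma src_xgerm: "\<gamma> \<in> F \<Longrightarrow> src (xgerm j \<gamma> v) = branch j v"
  by (simp add: xgerm_def src_germ)

lemma z_e_eq_ygerm: "z_e f n = ygerm 0"
  by (simp add: z_e_def ygerm_def)

lemma trace_seq_eq_of_iota_branch:
  assumes "\<beta> \<in> F" and "\<gamma> \<in> F"
    and "iota f n \<beta> (replicate j True @ False # c # r) = iota f n \<gamma> (replicate j True @ False # c # r)"
  shows "trace_seq \<beta> j = trace_seq \<gamma> j"
proof -
  have "a_act (c # r) \<noteq> c # r"
    by simp
  then have "trace_seq \<beta> j = 1 \<longleftrightarrow> trace_seq \<gamma> j = 1"
    using assms(3) by (auto simp: iota_branch split: if_splits)
  then show ?thesis
    using trace_seq_0_or_1[OF assms(1), of j] trace_seq_0_or_1[OF assms(2), of j] by auto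
qed

lemma xgerm_eq_iff:
  assumes "\<beta> \<in> F" and "\<gamma> \<in> F"
  shows "xgerm j \<beta> v = xgerm j \<gamma> v \<longleftrightarrow> trace_seq \<beta> j = trace_seq \<gamma> j"
proof
  assume "xgerm j \<beta> v = xgerm j \<gamma> v"
  then have "germ_eq ([], iota f n \<beta>, [], branch j v) ([], iota f n \<gamma>, [], branch j v)"
    using assms by (simp add: xgerm_def germ_eq_conv)
  from germ_eq_eventually[OF this tree_automorphism_iota tree_automorphism_iota]
  obtain K where "j + 2 \<le> K"
    and "\<exists>\<delta> \<delta>'. pref (branch j v) K = [] @ \<delta> \<and> pref (branch j v) K = [] @ \<delta>' \<and>
       [] @ iota f n \<beta> \<delta> = [] @ iota f n \<gamma> \<delta>' \<and>
       restr (iota f n \<beta>) \<delta> = restr (iota f n \<gamma>) \<delta>'"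
    by (rule eventually_sequentially_obtain_ge)
  moreover obtain r where "pref (branch j v) K = replicate j True @ False # v 0 # r"
    using pref_branch[OF \<open>j + 2 \<le> K\<close>] by blast
  ultimately show "trace_seq \<beta> j = trace_seq \<gamma> j"
    using trace_seq_eq_of_iota_branch[OF assms] by auto
next
  assume eq: "trace_seq \<beta> j = trace_seq \<gamma> j"
  obtain r where r: "pref (branch j v) (j + 2) = replicate j True @ False # v 0 # r"
    using pref_branch[of j "j + 2" v] by blast
  have "germ_eq ([], iota f n \<beta>, [], branch j v) ([], iota f n \<gamma>, [], branch j v)"
    unfolding germ_eq_iff using r eq
    by (intro conjI refl exI[of _ "j + 2"]) (simp add: iota_branch restr_iota_after_False)
  then show "xgerm j \<beta> v = xgerm j \<gamma> v"
    using assms by (simp add: xgerm_def germ_eq_conv)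
qed

lemma ygerm_eq_iff:
  assumes "\<beta> \<in> F" and "\<gamma> \<in> F"
  shows "ygerm \<beta> = ygerm \<gamma> \<longleftrightarrow> trace_seq \<beta> = trace_seq \<gamma>"
proof
  assume "ygerm \<beta> = ygerm \<gamma>"
  then have "germ_eq ([], iota f n \<beta>, [], ones) ([], iota f n \<gamma>, [], ones)"
    using assms by (simp add: ygerm_def germ_eq_conv)
  then obtain k where "restr (iota f n \<beta>) (replicate k True) = restr (iota f n \<gamma>) (replicate k True)"
    by (auto simp: germ_eq_iff pref_ones)
  then have iota_eq: "iota f n ((alpha_mult f ^^ k) \<beta>) = iota f n ((alpha_mult f ^^ k) \<gamma>)"
    by (simp add: restr_iota_replicate_True)
  have "trace_seq \<beta> (j + k) = trace_seq \<gamma> (j + k)" for j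
    using trace_seq_eq_of_iota_branch[OF funpow_alpha_mult_in_F[OF assms(1)]
        funpow_alpha_mult_in_F[OF assms(2)], of k j False "[]"] iota_eq
    by (simp add: trace_seq_funpow_alpha_mult)
  then have "\<forall>\<^sub>F j in sequentially. trace_seq \<beta> j = trace_seq \<gamma> j"
    unfolding eventually_sequentially by (metis le_add_diff_inverse2)
  then show "trace_seq \<beta> = trace_seq \<gamma>"
    by (rule trace_seq_eqI_eventually[OF assms])
next
  assume "trace_seq \<beta> = trace_seq \<gamma>"
  then have "iota f n \<beta> = iota f n \<gamma>"
    by (rule iota_cong_trace_seq)
  then show "ygerm \<beta> = ygerm \<gamma>"
    by (simp add: ygerm_def)
qed

lemma src_ygerm: "\<beta> \<in> F \<Longrightarrow> src (ygerm \<beta>) = ones"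
  by (simp add: ygerm_def src_germ)

lemma trace_seq_eq_of_xgerm_in_germ_set:
  assumes "\<beta> \<in> F" and "\<gamma> \<in> F" and "xgerm j \<gamma> v \<in> germ_set f n [] (iota f n \<beta>) [] U"
  shows "trace_seq \<beta> j = trace_seq \<gamma> j"
proof -
  obtain w where "xgerm j \<gamma> v = germ f n ([], iota f n \<beta>, [], w)"
    using assms(3) by (auto simp: germ_set_def)
  moreover from this have "w = branch j v"
    using assms(1,2) by (metis src_germ src_xgerm valid_rep_iota)
  ultimately have "xgerm j \<beta> v = xgerm j \<gamma> v"
    by (simp add: xgerm_def)
  then show ?thesis
    using assms(1,2) by (simp add: xgerm_eq_iff)
qed

lemma eventually_xgerm_in_open:
  assumes "openin (Gtop f n) B" and "\<beta> \<in> F" and "ygerm \<beta> \<in> B"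
  shows "\<forall>\<^sub>F j in sequentially. \<forall>v. xgerm j \<beta> v \<in> B"
proof -
  obtain K where "\<And>w'. pref w' K = pref ones K \<Longrightarrow> germ f n ([], iota f n \<beta>, [], w') \<in> B"
    using openin_Gtop_pref_nbhd[OF assms(1) valid_rep_iota[OF assms(2)]] assms(3) ygerm_def by metis
  then have "xgerm j \<beta> v \<in> B" if "K \<le> j" for j v
    using that by (simp add: xgerm_def pref_branch_le pref_ones)
  then show ?thesis
    unfolding eventually_sequentially by blast
qed

lemma germ_eq_iota_branch:
  assumes g0: "tree_automorphism g0" and "length \<mu> \<le> j"
    and "germ_eq (\<eta>, g0, \<mu>, branch j v) ([], iota f n \<gamma>, [], branch j v)"
  shows "\<mu> = replicate (length \<mu>) True" and "\<eta> = \<mu>"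
    and "g0 (replicate (j - length \<mu>) True) = replicate (j - length \<mu>) True"
proof -
  let ?m = "length \<mu>"
  from germ_eq_eventually[OF assms(3) g0 tree_automorphism_iota]
  obtain K \<delta> where "j \<le> K" and pref: "pref (branch j v) K = \<mu> @ \<delta>"
    and img: "\<eta> @ g0 \<delta> = iota f n \<gamma> (\<mu> @ \<delta>)"
    by (rule eventually_sequentially_obtain_ge) auto
  have ones: "take j (\<mu> @ \<delta>) = replicate j True"
    unfolding pref[symmetric] take_pref[OF \<open>j \<le> K\<close>] by (rule pref_branch_le) simp
  have "\<mu> = take ?m (take j (\<mu> @ \<delta>))"
    using assms(2) by (simp add: min_absorb1)
  also have "\<dots> = replicate ?m True"
    using assms(2) by (simp only: ones take_replicate min_absorb1)
  finally show \<mu>: "\<mu> = replicate ?m True" .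
  have "\<mu> @ take (j - ?m) \<delta> = replicate ?m True @ replicate (j - ?m) True"
    using ones assms(2) by (simp flip: replicate_add)
  then have \<delta>: "take (j - ?m) \<delta> = replicate (j - ?m) True"
    using \<mu> by simp
  have "length \<eta> = ?m"
    using arg_cong[OF img, of length] g0 by (simp add: tree_automorphism_length)
  have "take j (iota f n \<gamma> (\<mu> @ \<delta>)) = iota f n \<gamma> (replicate j True)"
    by (simp only: tree_automorphism_take[OF tree_automorphism_iota] ones)
  also have "\<dots> = replicate j True"
    using iota_replicate_True[of f n \<gamma> j "[]"] by simp
  finally have iota_ones: "take j (iota f n \<gamma> (\<mu> @ \<delta>)) = replicate j True" .
  have "\<eta> @ g0 (replicate (j - ?m) True) = \<eta> @ take (j - ?m) (g0 \<delta>)"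
    by (simp only: \<delta> tree_automorphism_take[OF g0])
  also have "\<dots> = take j (\<eta> @ g0 \<delta>)"
    using \<open>length \<eta> = ?m\<close> assms(2) by simp
  also have "\<dots> = replicate ?m True @ replicate (j - ?m) True"
    using assms(2) by (simp only: img iota_ones flip: replicate_add) simp
  finally have "\<eta> @ g0 (replicate (j - ?m) True) = replicate ?m True @ replicate (j - ?m) True" .
  then show "\<eta> = \<mu>" and "g0 (replicate (j - ?m) True) = replicate (j - ?m) True"
    using \<mu> \<open>length \<eta> = ?m\<close> by simp_all
qed

lemma germ_ones_eq_ygerm:
  assumes g0: "g0 \<in> Ggroup f n" and "\<beta>' \<in> F"
    and restr: "restr g0 (replicate t True) = iota f n \<beta>'"
    and g0_ones: "g0 (replicate t True) = replicate t True"
  obtains \<beta> where "\<beta> \<in> F" and "germ f n (replicate m True, g0, replicate m True, ones) = ygerm \<beta>"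
proof -
  obtain \<beta> where \<beta>: "\<beta> \<in> F" "(alpha_mult f ^^ (m + t)) \<beta> = \<beta>'"
    using funpow_alpha_mult_surj[OF assms(2)] by blast
  have "germ_eq (replicate m True, g0, replicate m True, ones) ([], iota f n \<beta>, [], ones)"
    unfolding germ_eq_iff
  proof (intro conjI refl exI)
    show "pref ones (m + t) = replicate m True @ replicate t True"
      and "pref ones (m + t) = [] @ replicate (m + t) True"
      by (simp_all add: pref_ones replicate_add)
    show "replicate m True @ g0 (replicate t True) = [] @ iota f n \<beta> (replicate (m + t) True)"
      using g0_ones iota_replicate_True[of f n \<beta> "m + t" "[]"] by (simp add: replicate_add)
    show "restr g0 (replicate t True) = restr (iota f n \<beta>) (replicate (m + t) True)"
      using restr \<beta> by (simp add: restr_iota_replicate_True)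
  qed
  then have "germ f n (replicate m True, g0, replicate m True, ones) = ygerm \<beta>"
    using g0 \<beta> by (simp add: ygerm_def germ_eq_conv cyl_iff pref_ones)
  then show ?thesis
    using that \<beta> by blast
qed

lemma germ_eq_near_limit_of_xgerm:
  assumes \<gamma>: "\<gamma> \<in> F" and lim: "\<And>K. y \<in> Gtop f n closure_of {xgerm j \<gamma> v | j v. K \<le> j}"
    and valid: "valid_rep f n (\<eta>, g0, \<mu>, w)" and y: "y = germ f n (\<eta>, g0, \<mu>, w)"
    and "length \<mu> \<le> K"
  shows "\<exists>j\<ge>K. \<exists>v. branch j v \<in> cyl (pref w K) \<and>
           germ_eq (\<eta>, g0, \<mu>, branch j v) ([], iota f n \<gamma>, [], branch j v)"
proof -
  let ?O = "germ_set f n \<eta> g0 \<mu> (cyl (pref w K))"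
  have sub: "cyl (pref w K) \<subseteq> cyl \<mu>"
    using valid \<open>length \<mu> \<le> K\<close> by (simp add: cyl_pref_subset)
  then have "openin (Gtop f n) ?O"
    using valid by (intro openin_germ_set cantor_open_cyl) simp_all
  moreover have "y \<in> ?O"
    using y in_cyl_pref by (auto simp: germ_set_def)
  ultimately obtain x where "x \<in> {xgerm j \<gamma> v | j v. K \<le> j}" and "x \<in> ?O"
    using lim[of K] unfolding in_closure_of by blast
  then obtain j v w' where "K \<le> j" "w' \<in> cyl (pref w K)"
    and eq: "xgerm j \<gamma> v = germ f n (\<eta>, g0, \<mu>, w')"
    unfolding germ_set_def by blast
  moreover have valid': "valid_rep f n (\<eta>, g0, \<mu>, w')"
    using \<open>w' \<in> cyl (pref w K)\<close> sub valid by auto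
  ultimately have "w' = branch j v"
    using \<gamma> by (metis src_germ src_xgerm)
  then show ?thesis
    using \<open>K \<le> j\<close> \<open>w' \<in> cyl (pref w K)\<close> eq \<gamma> valid'
    by (metis germ_eq_conv valid_rep_iota xgerm_def)
qed

lemma ygerm_of_limit_of_xgerm:
  assumes \<gamma>: "\<gamma> \<in> F" and lim: "\<And>K. y \<in> Gtop f n closure_of {xgerm j \<gamma> v | j v. K \<le> j}"
  obtains \<beta> where "\<beta> \<in> F" and "y = ygerm \<beta>"
proof -
  have "y \<in> topspace (Gtop f n)"
    using lim in_closure_of by fast
  then obtain \<eta> g0 \<mu> w where valid: "valid_rep f n (\<eta>, g0, \<mu>, w)" and y: "y = germ f n (\<eta>, g0, \<mu>, w)"
    by (rule topspace_GtopE)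
  then have g0: "g0 \<in> Ggroup f n"
    by simp
  note near = germ_eq_near_limit_of_xgerm[OF \<gamma> lim valid y]
  \<comment> \<open>Comparing with far-out branches forces source \<open>ones\<close>, \<open>\<eta> = \<mu> = 1^m\<close> and \<open>g0\<close> fixing
    a long word of ones; contraction then turns the restriction of \<open>g0\<close> there into some \<open>iota\<close>.\<close>
  have "w = ones"
  proof (rule pref_eqI)
    fix K
    obtain j v where "max K (length \<mu>) \<le> j" and "branch j v \<in> cyl (pref w (max K (length \<mu>)))"
      using near[of "max K (length \<mu>)"] by auto
    then have "pref w (max K (length \<mu>)) = pref ones (max K (length \<mu>))"
      by (simp add: cyl_iff pref_branch_le pref_ones)
    then show "pref w K = pref ones K"
      by (rule pref_eq_mono) simp
  qed
  obtain T where T: "\<And>t. T \<le> t \<Longrightarrow> \<exists>\<beta>'\<in>F. restr g0 (replicate t True) = iota f n \<beta>'"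
    using restr_eventually_iota[OF g0, of ones] by (auto simp: eventually_sequentially pref_ones)
  let ?m = "length \<mu>"
  obtain j v where "?m + T \<le> j"
    and eq: "germ_eq (\<eta>, g0, \<mu>, branch j v) ([], iota f n \<gamma>, [], branch j v)"
    using near[of "?m + T"] by auto
  then have "?m \<le> j" and "T \<le> j - ?m"
    by simp_all
  obtain \<beta>' where "\<beta>' \<in> F" and restr: "restr g0 (replicate (j - ?m) True) = iota f n \<beta>'"
    using T[OF \<open>T \<le> j - ?m\<close>] by blast
  note shape = germ_eq_iota_branch[OF Ggroup_tree_automorphism[OF g0] \<open>?m \<le> j\<close> eq]
  obtain \<beta> where "\<beta> \<in> F" and "germ f n (replicate ?m True, g0, replicate ?m True, ones) = ygerm \<beta>"
    using germ_ones_eq_ygerm[OF g0 \<open>\<beta>' \<in> F\<close> restr shape(3)] .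
  then show ?thesis
    using that y \<open>w = ones\<close> shape(1,2) by simp
qed

lemma eventually_xgerm_in_compact:
  assumes B: "compactin (Gtop f n) B" and \<gamma>: "\<gamma> \<in> F"
  shows "\<forall>\<^sub>F j in sequentially. \<forall>v. xgerm j \<gamma> v \<in> B \<longrightarrow>
           (\<exists>\<beta>\<in>F. ygerm \<beta> \<in> B \<and> trace_seq \<beta> j = trace_seq \<gamma> j)"
proof (rule ccontr)
  define R where "R j \<longleftrightarrow> (\<exists>\<beta>\<in>F. ygerm \<beta> \<in> B \<and> trace_seq \<beta> j = trace_seq \<gamma> j)" for j
  define T where "T K = {xgerm j \<gamma> v | j v. K \<le> j \<and> xgerm j \<gamma> v \<in> B \<and> \<not> R j}" for K
  assume "\<not> ?thesis"
  then have "\<exists>j\<ge>K. \<exists>v. xgerm j \<gamma> v \<in> B \<and> \<not> R j" for K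
    unfolding R_def not_eventually frequently_sequentially by blast
  then have "T K \<noteq> {}" for K
    unfolding T_def by blast
  moreover have "T K \<subseteq> B" and "K \<le> L \<Longrightarrow> T L \<subseteq> T K" for K L
    unfolding T_def by (blast, force)
  ultimately obtain y where "y \<in> B" and y: "\<And>K. y \<in> Gtop f n closure_of T K"
    using compactin_nested_closure_of[OF B] by metis
  have "T K \<subseteq> {xgerm j \<gamma> v | j v. K \<le> j}" for K
    unfolding T_def by blast
  then have "y \<in> Gtop f n closure_of {xgerm j \<gamma> v | j v. K \<le> j}" for K
    using y closure_of_mono by blast
  then obtain \<beta> where "\<beta> \<in> F" and y_eq: "y = ygerm \<beta>"
    using ygerm_of_limit_of_xgerm[OF \<gamma>] by blast
  \<comment> \<open>Near \<open>ygerm \<beta>\<close> every \<open>xgerm j \<gamma> v\<close> equals \<open>xgerm j \<beta> v\<close>, so the trace condition holds there.\<close>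
  let ?O = "germ_set f n [] (iota f n \<beta>) [] (cyl [])"
  have "openin (Gtop f n) ?O"
    using \<open>\<beta> \<in> F\<close> by (simp add: openin_germ_set cantor_open_cyl)
  moreover have "y \<in> ?O"
    using y_eq by (auto simp: germ_set_def ygerm_def)
  ultimately obtain j v where "xgerm j \<gamma> v \<in> ?O" and "\<not> R j"
    using y[of 0] unfolding in_closure_of T_def by blast
  then show False
    using trace_seq_eq_of_xgerm_in_germ_set[OF \<open>\<beta> \<in> F\<close> \<gamma>] \<open>\<beta> \<in> F\<close> \<open>y \<in> B\<close> y_eq
    unfolding R_def by blast
qed

lemma eventually_xgerm_in_iff:
  assumes "compactin (Gtop f n) B" and "openin (Gtop f n) B"
  shows "\<forall>\<^sub>F j in sequentially. \<forall>\<gamma>\<in>F. \<forall>v.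
           xgerm j \<gamma> v \<in> B \<longleftrightarrow> (\<exists>\<beta>\<in>F. ygerm \<beta> \<in> B \<and> trace_seq \<beta> j = trace_seq \<gamma> j)"
proof -
  let ?S = "{\<beta>\<in>F. ygerm \<beta> \<in> B}"
  have "\<forall>\<^sub>F j in sequentially. \<forall>\<beta>\<in>?S. \<forall>v. xgerm j \<beta> v \<in> B"
    using finite_F by (intro eventually_ball_finite) (auto intro: eventually_xgerm_in_open[OF assms(2)])
  moreover have "\<forall>\<^sub>F j in sequentially. \<forall>\<gamma>\<in>F. \<forall>v. xgerm j \<gamma> v \<in> B \<longrightarrow>
      (\<exists>\<beta>\<in>F. ygerm \<beta> \<in> B \<and> trace_seq \<beta> j = trace_seq \<gamma> j)"
    by (intro eventually_ball_finite finite_F ballI eventually_xgerm_in_compact[OF assms(1)])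
  ultimately show ?thesis
  proof eventually_elim
    case (elim j)
    then show ?case
      by (metis (mono_tags, lifting) mem_Collect_eq xgerm_eq_iff)
  qed
qed

lemma compact_open_bisection_ygerm_iff:
  assumes "compact_open_bisection f n B" and "\<beta>0 \<in> F" and "ygerm \<beta>0 \<in> B"
  shows "(\<exists>\<beta>\<in>F. ygerm \<beta> \<in> B \<and> P (trace_seq \<beta>)) \<longleftrightarrow> P (trace_seq \<beta>0)"
proof
  assume "\<exists>\<beta>\<in>F. ygerm \<beta> \<in> B \<and> P (trace_seq \<beta>)"
  then obtain \<beta> where "\<beta> \<in> F" and "ygerm \<beta> \<in> B" and "P (trace_seq \<beta>)"
    by blast
  moreover have "inj_on src B"
    using assms(1) by (simp add: compact_open_bisection_def)
  ultimately have "ygerm \<beta> = ygerm \<beta>0"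
    using assms(2,3) src_ygerm by (metis inj_onD)
  then show "P (trace_seq \<beta>0)"
    using \<open>\<beta> \<in> F\<close> assms(2) \<open>P (trace_seq \<beta>)\<close> by (simp add: ygerm_eq_iff)
next
  assume "P (trace_seq \<beta>0)"
  then show "\<exists>\<beta>\<in>F. ygerm \<beta> \<in> B \<and> P (trace_seq \<beta>)"
    using assms(2,3) by blast
qed

lemma ygerm_zero_in_iff: "ygerm 0 \<in> B \<longleftrightarrow> (\<exists>\<beta>\<in>F. ygerm \<beta> \<in> B \<and> trace_seq \<beta> = (\<lambda>_. 0))"
proof
  show "ygerm 0 \<in> B \<Longrightarrow> \<exists>\<beta>\<in>F. ygerm \<beta> \<in> B \<and> trace_seq \<beta> = (\<lambda>_. 0)"
    using zero_in_F trace_seq_zero by blast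
  assume "\<exists>\<beta>\<in>F. ygerm \<beta> \<in> B \<and> trace_seq \<beta> = (\<lambda>_. 0)"
  then obtain \<beta> where "\<beta> \<in> F" "ygerm \<beta> \<in> B" "trace_seq \<beta> = trace_seq 0"
    by auto
  then show "ygerm 0 \<in> B"
    using ygerm_eq_iff[OF \<open>\<beta> \<in> F\<close> zero_in_F] by simp
qed

lemma steinberg_on_xgerm:
  fixes h :: "rep set \<Rightarrow> 'k::field"
  assumes "h \<in> steinberg f n"
  obtains I :: "nat set" and b J c where "finite I" and "\<And>i. i \<in> I \<Longrightarrow> b i \<in> F"
    and "\<And>j \<gamma> v. J \<le> j \<Longrightarrow> \<gamma> \<in> F \<Longrightarrow>
           h (xgerm j \<gamma> v) = (\<Sum>i | i \<in> I \<and> trace_seq (b i) j = trace_seq \<gamma> j. c i)"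
    and "h (z_e f n) = (\<Sum>i | i \<in> I \<and> trace_seq (b i) = (\<lambda>_. 0). c i)"
proof -
  obtain m and c :: "nat \<Rightarrow> 'k" and B where B: "\<And>i. i < m \<Longrightarrow> compact_open_bisection f n (B i)"
    and h: "h = (\<lambda>x. \<Sum>i<m. c i * indicator (B i) x)"
    using assms unfolding steinberg_def by blast
  define I where "I = {i. i < m \<and> (\<exists>\<beta>\<in>F. ygerm \<beta> \<in> B i)}"
  define b where "b i = (SOME \<beta>. \<beta> \<in> F \<and> ygerm \<beta> \<in> B i)" for i
  have b: "b i \<in> F" and b_in: "ygerm (b i) \<in> B i" if "i \<in> I" for i
    using someI_ex[of "\<lambda>\<beta>. \<beta> \<in> F \<and> ygerm \<beta> \<in> B i"] that by (auto simp: I_def b_def)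
  have meets: "i < m \<and> (\<exists>\<beta>\<in>F. ygerm \<beta> \<in> B i \<and> P (trace_seq \<beta>)) \<longleftrightarrow> i \<in> I \<and> P (trace_seq (b i))"
    for i P
    using compact_open_bisection_ygerm_iff[OF B b b_in] by (auto simp: I_def)
  have h_sum: "h x = (\<Sum>i | i < m \<and> x \<in> B i. c i)" for x
    unfolding h by (simp add: indicator_def sum.inter_filter lessThan_def Int_def)
  have "\<forall>\<^sub>F j in sequentially. \<forall>i\<in>{..<m}. \<forall>\<gamma>\<in>F. \<forall>v.
          xgerm j \<gamma> v \<in> B i \<longleftrightarrow> (\<exists>\<beta>\<in>F. ygerm \<beta> \<in> B i \<and> trace_seq \<beta> j = trace_seq \<gamma> j)"
    using B by (intro eventually_ball_finite finite_lessThan ballI eventually_xgerm_in_iff)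
      (auto simp: compact_open_bisection_def)
  then obtain J where J: "\<And>j i \<gamma> v. J \<le> j \<Longrightarrow> i < m \<Longrightarrow> \<gamma> \<in> F \<Longrightarrow>
      xgerm j \<gamma> v \<in> B i \<longleftrightarrow> (\<exists>\<beta>\<in>F. ygerm \<beta> \<in> B i \<and> trace_seq \<beta> j = trace_seq \<gamma> j)"
    unfolding eventually_sequentially by blast
  show ?thesis
  proof
    show "finite I"
      by (simp add: I_def)
    show "b i \<in> F" if "i \<in> I" for i
      using that by (rule b)
    show "h (xgerm j \<gamma> v) = (\<Sum>i | i \<in> I \<and> trace_seq (b i) j = trace_seq \<gamma> j. c i)"
      if "J \<le> j" and "\<gamma> \<in> F" for j \<gamma> v
    proof -
      have "{i. i < m \<and> xgerm j \<gamma> v \<in> B i} = {i. i \<in> I \<and> trace_seq (b i) j = trace_seq \<gamma> j}"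
        using J[OF that(1) _ that(2)] meets[of _ "\<lambda>s. s j = trace_seq \<gamma> j"] by blast
      then show ?thesis
        by (simp only: h_sum)
    qed
    have "{i. i < m \<and> ygerm 0 \<in> B i} = {i. i \<in> I \<and> trace_seq (b i) = (\<lambda>_. 0)}"
      using meets[of _ "\<lambda>s. s = (\<lambda>_. 0)"] by (simp add: ygerm_zero_in_iff)
    then show "h (z_e f n) = (\<Sum>i | i \<in> I \<and> trace_seq (b i) = (\<lambda>_. 0). c i)"
      by (simp only: h_sum z_e_eq_ygerm)
  qed
qed

lemma interior_supp_nonempty_of_xgerm:
  fixes h :: "rep set \<Rightarrow> 'k::field"
  assumes "\<gamma> \<in> F" and nonzero: "\<And>v. h (xgerm j \<gamma> v) \<noteq> 0"
  shows "Gtop f n interior_of supp f n h \<noteq> {}"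
proof -
  let ?O = "germ_set f n [] (iota f n \<gamma>) [] (cyl (replicate j True @ [False]))"
  have "openin (Gtop f n) ?O"
    using assms(1) by (intro openin_germ_set cantor_open_cyl) auto
  moreover have "?O \<subseteq> supp f n h"
  proof
    fix x assume "x \<in> ?O"
    then obtain v where x: "x = xgerm j \<gamma> v"
      by (auto simp: germ_set_def xgerm_def dest: cyl_branch)
    then have "x \<in> Grpd f n"
      using assms(1) unfolding Grpd_def xgerm_def by fastforce
    then show "x \<in> supp f n h"
      using nonzero x by (simp add: supp_def)
  qed
  ultimately have "?O \<subseteq> Gtop f n interior_of supp f n h"
    by (rule interior_of_maximal[rotated])
  moreover have "xgerm j \<gamma> ones \<in> ?O"
    using branch_in_cyl by (auto simp: germ_set_def xgerm_def)
  ultimately show ?thesis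
    by blast
qed

lemma steinberg_interior_supp:
  fixes h :: "rep set \<Rightarrow> 'k::field_char_0"
  assumes "h \<in> steinberg f n" and "h (z_e f n) \<noteq> 0"
  shows "Gtop f n interior_of supp f n h \<noteq> {}"
proof -
  obtain I :: "nat set" and b J c where "finite I" and b: "\<And>i. i \<in> I \<Longrightarrow> b i \<in> F"
    and on_xgerm: "\<And>j \<gamma> v. J \<le> j \<Longrightarrow> \<gamma> \<in> F \<Longrightarrow>
           h (xgerm j \<gamma> v) = (\<Sum>i | i \<in> I \<and> trace_seq (b i) j = trace_seq \<gamma> j. c i)"
    and on_z_e: "h (z_e f n) = (\<Sum>i | i \<in> I \<and> trace_seq (b i) = (\<lambda>_. 0). c i)"
    by (rule steinberg_on_xgerm[OF assms(1)]) (rule that)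
  have "\<exists>j \<gamma>. J \<le> j \<and> \<gamma> \<in> F \<and> (\<Sum>i | i \<in> I \<and> trace_seq (b i) j = trace_seq \<gamma> j. c i) \<noteq> 0"
  proof (rule ccontr)
    assume "\<not> ?thesis"
    then have "(\<Sum>i | i \<in> I \<and> trace_seq (b i) = (\<lambda>_. 0). c i) = 0"
      by (intro sum_trace_seq_null_eq_0[OF \<open>finite I\<close> b]) auto
    then show False
      using assms(2) on_z_e by simp
  qed
  then obtain j \<gamma> where "J \<le> j" and "\<gamma> \<in> F"
    and "(\<Sum>i | i \<in> I \<and> trace_seq (b i) j = trace_seq \<gamma> j. c i) \<noteq> 0"
    by blast
  then show ?thesis
    using on_xgerm by (intro interior_supp_nonempty_of_xgerm[OF \<open>\<gamma> \<in> F\<close>, of h j]) simp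
qed

end

theorem mainTheorem10:
  fixes f :: "bit poly" and n :: nat and h :: "rep set \<Rightarrow> 'k::field_char_0"
  assumes "n \<ge> 2" and "primitive_poly f n"
    and "h \<in> steinberg f n" and "h (z_e f n) \<noteq> 0"
  shows "Gtop f n interior_of supp f n h \<noteq> {} \<and> h \<notin> singular f n"
proof -
  interpret gf2n f n
    using assms(1,2) by unfold_locales
  show ?thesis
    using steinberg_interior_supp[OF assms(3,4)] by (simp add: singular_def)
qed

end
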